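(* For every parsummable category $\mathcal C$, the tensor product $\otimes$ and the transformation $\tau$ described below are well-defined (independent of all choices) and make $\Sigma(\mathcal C)$ into a permutative category with unit the empty sequence $\epsilon$. If $F\colon\mathcal C\to\mathcal D$ is a morphism of parsummable categories, then $\Sigma(F)$ is a strict symmetric monoidal functor with respect to these permutative structures. In this way $\Sigma$ lifts to a functor $\mathbf{ParSumCat}\to\mathbf{PermCat}$.
   Context: Let $\omega=\{1,2,\dots\}$, $\mathbf m=\{1,\dots,m\}$, $\mathcal M$ the monoid of injections $\omega\to\omega$, $E\mathcal M$ the category with objects $\mathcal M$ and a unique morphism between any two objects. An $E\mathcal M$-category is a small category with a strict $E\mathcal M$-action; $u_*$ denotes the action of $u$, $[v,u]\colon u_*\Rightarrow v_*$ the natural isomorphism from the morphism $u\to v$. $X$ is supported on finite $A\subset\omega$ if $u_*X=X$ whenever $u$ fixes $A$ pointwise; $\mathrm{supp}(X)$ is the intersection of such finite $A$; tame means all objects finitely supported. A parsummable category is a tame $E\mathcal M$-category with an object $0$ of empty support and a functor $+$ on the full subcategory of disjointly supported pairs in $\mathcal C\times\mathcal C$, strictly unital, associative, commutative and $E\mathcal M$-equivariant; morphisms of parsummable categories ($\mathbf{ParSumCat}$) are strictly equivariant functors preserving $0$ and $+$. $\mathbf{PermCat}$ is the category of small permutative categories (symmetric monoidal categories with identity associativity and unit isomorphisms) and strict symmetric monoidal functors. For an injection $\phi\colon\mathbf m\times\omega\to\omega$, $\phi_*(X_1,\dots,X_m)=\sum_i\phi(i,-)_*(X_i)$ and $[\phi',\phi]_{X_\bullet}=\sum_i[\phi'(i,-),\phi(i,-)]_{X_i}$.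 $\Sigma(\mathcal C)$ is the category whose objects are finite sequences $(X_1,\dots,X_m)$, $m\ge0$, of objects of $\mathcal C$ (the empty one is $\epsilon$), whose morphisms $(X_1,\dots,X_m)\to(Y_1,\dots,Y_n)$ are classes $[\psi,f,\phi]$ of triples (injections $\phi\colon\mathbf m\times\omega\to\omega$, $\psi\colon\mathbf n\times\omega\to\omega$, $f\colon\phi_*(X_\bullet)\to\psi_*(Y_\bullet)$) modulo $(\psi,f,\phi)\sim(\psi',[\psi',\psi]\circ f\circ[\phi,\phi'],\phi')$, with composition $[\rho,g,\theta]\circ[\psi,f,\phi]=[\rho,g\circ[\theta,\psi]\circ f,\phi]$. For $F$ a morphism of parsummable categories, $\Sigma(F)$ applies $F$ entrywise on objects and sends $[\psi,f,\phi]$ to $[\psi,F f,\phi]$. Tensor product: on objects, concatenation of sequences; for morphisms $\alpha\colon X_\bullet\to Y_\bullet$, $\beta\colon X'_\bullet\to Y'_\bullet$ choose representatives $(\psi,f,\phi)$ of $\alpha$ and $(\rho,g,\theta)$ of $\beta$ with $\mathrm{im}\,\phi\cap\mathrm{im}\,\theta=\varnothing$, $\mathrm{im}\,\psi\cap\mathrm{im}\,\rho=\varnothing$, and set $\alpha\otimes\beta=[\psi+\rho,f+g,\phi+\theta]$, where $(\phi+\theta)(i,x)=\phi(i,x)$ for $i\le m$ and $\theta(i-m,x)$ otherwise ($m$ the length of $X_\bullet$), similarly for $\psi+\rho$. Symmetry: for $X_\bullet$ of length $m$ and $Y_\bullet$ of length $n$, $\tau_{X_\bullet,Y_\bullet}=[\bar\phi,\mathrm{id},\phi]\colon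 X_\bullet\otimes Y_\bullet\to Y_\bullet\otimes X_\bullet$ for any injection $\phi\colon(\mathbf{m+n})\times\omega\to\omega$, where $\bar\phi(i,x)=\phi(i+m,x)$ for $i\le n$ and $\phi(i-n,x)$ otherwise. *)

theory Defs
  imports Main "HOL-Library.Nat_Bijection"
begin

record ('o,'m) cat =
  ob  :: "'o set"
  ar  :: "'m set"
  dm  :: "'m \<Rightarrow> 'o"
  cd  :: "'m \<Rightarrow> 'o"
  idn :: "'o \<Rightarrow> 'm"
  cmp :: "'m \<Rightarrow> 'm \<Rightarrow> 'm"   (* cmp C g f = g \<circ> f *)

definition hom :: "('o,'m,'z) cat_scheme \<Rightarrow> 'o \<Rightarrow> 'o \<Rightarrow> 'm set" where
  "hom C X Y = {f \<in> ar C. dm C f = X \<and> cd C f = Y}"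

definition is_cat :: "('o,'m,'z) cat_scheme \<Rightarrow> bool" where
  "is_cat C \<longleftrightarrow>
     (\<forall>f\<in>ar C. dm C f \<in> ob C \<and> cd C f \<in> ob C) \<and>
     (\<forall>X\<in>ob C. idn C X \<in> hom C X X) \<and>
     (\<forall>f\<in>ar C. \<forall>g\<in>ar C. dm C g = cd C f \<longrightarrow> cmp C g f \<in> hom C (dm C f) (cd C g)) \<and>
     (\<forall>f\<in>ar C. cmp C f (idn C (dm C f)) = f \<and> cmp C (idn C (cd C f)) f = f) \<and>
     (\<forall>f\<in>ar C. \<forall>g\<in>ar C. \<forall>h\<in>ar C. dm C g = cd C f \<longrightarrow> dm C h = cd C g \<longrightarrow>
        cmp C h (cmp C g f) = cmp C (cmp C h g) f)"

definition is_functor ::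
  "('o,'m,'z) cat_scheme \<Rightarrow> ('p,'n,'y) cat_scheme \<Rightarrow> ('o \<Rightarrow> 'p) \<Rightarrow> ('m \<Rightarrow> 'n) \<Rightarrow> bool" where
  "is_functor C D Fo Fm \<longleftrightarrow>
     (\<forall>X\<in>ob C. Fo X \<in> ob D) \<and>
     (\<forall>f\<in>ar C. Fm f \<in> hom D (Fo (dm C f)) (Fo (cd C f))) \<and>
     (\<forall>X\<in>ob C. Fm (idn C X) = idn D (Fo X)) \<and>
     (\<forall>f\<in>ar C. \<forall>g\<in>ar C. dm C g = cd C f \<longrightarrow> Fm (cmp C g f) = cmp D (Fm g) (Fm f))"

text \<open>omega is modelled by the type nat (a relabelling of 1,2,...); M = injections nat \<Rightarrow> nat.\<close>

definition injs :: "(nat \<Rightarrow> nat) set" where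
  "injs = {u. inj u}"

record ('o,'m) psc = "('o,'m) cat" +
  act  :: "(nat \<Rightarrow> nat) \<Rightarrow> 'o \<Rightarrow> 'o"
  actm :: "(nat \<Rightarrow> nat) \<Rightarrow> 'm \<Rightarrow> 'm"
  trn  :: "(nat \<Rightarrow> nat) \<Rightarrow> (nat \<Rightarrow> nat) \<Rightarrow> 'o \<Rightarrow> 'm"   (* trn C v u X = [v,u]_X *)
  zer  :: "'o"
  pls  :: "'o \<Rightarrow> 'o \<Rightarrow> 'o"
  plsm :: "'m \<Rightarrow> 'm \<Rightarrow> 'm"

definition is_EMcat :: "('o,'m,'z) psc_scheme \<Rightarrow> bool" where
  "is_EMcat C \<longleftrightarrow> is_cat C \<and>
     (\<forall>u\<in>injs. is_functor C C (act C u) (actm C u)) \<and>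
     (\<forall>X\<in>ob C. act C id X = X) \<and> (\<forall>f\<in>ar C. actm C id f = f) \<and>
     (\<forall>u\<in>injs. \<forall>v\<in>injs. (\<forall>X\<in>ob C. act C (u \<circ> v) X = act C u (act C v X)) \<and>
                          (\<forall>f\<in>ar C. actm C (u \<circ> v) f = actm C u (actm C v f))) \<and>
     (\<forall>u\<in>injs. \<forall>v\<in>injs. \<forall>X\<in>ob C. trn C v u X \<in> hom C (act C u X) (act C v X)) \<and>
     (\<forall>u\<in>injs. \<forall>v\<in>injs. \<forall>f\<in>ar C.
        cmp C (trn C v u (cd C f)) (actm C u f) = cmp C (actm C v f) (trn C v u (dm C f))) \<and>
     (\<forall>u\<in>injs. \<forall>X\<in>ob C. trn C u u X = idn C (act C u X)) \<and>
     (\<forall>u\<in>injs. \<forall>v\<in>injs. \<forall>w\<in>injs. \<forall>X\<in>ob C.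
        cmp C (trn C w v X) (trn C v u X) = trn C w u X) \<and>
     (\<forall>u\<in>injs. \<forall>u'\<in>injs. \<forall>v\<in>injs. \<forall>v'\<in>injs. \<forall>X\<in>ob C.
        cmp C (trn C v' v (act C u' X)) (actm C v (trn C u' u X)) = trn C (v' \<circ> u') (v \<circ> u) X)"

definition supported_on :: "('o,'m,'z) psc_scheme \<Rightarrow> 'o \<Rightarrow> nat set \<Rightarrow> bool" where
  "supported_on C X A \<longleftrightarrow> (\<forall>u\<in>injs. (\<forall>a\<in>A. u a = a) \<longrightarrow> act C u X = X)"

definition supp :: "('o,'m,'z) psc_scheme \<Rightarrow> 'o \<Rightarrow> nat set" where
  "supp C X = \<Inter>{A. finite A \<and> supported_on C X A}"

definition tame :: "('o,'m,'z) psc_scheme \<Rightarrow> bool" where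
  "tame C \<longleftrightarrow> (\<forall>X\<in>ob C. \<exists>A. finite A \<and> supported_on C X A)"

definition dsj :: "('o,'m,'z) psc_scheme \<Rightarrow> 'o \<Rightarrow> 'o \<Rightarrow> bool" where
  "dsj C X Y \<longleftrightarrow> supp C X \<inter> supp C Y = {}"

definition dsjm :: "('o,'m,'z) psc_scheme \<Rightarrow> 'm \<Rightarrow> 'm \<Rightarrow> bool" where
  "dsjm C f g \<longleftrightarrow> dsj C (dm C f) (dm C g) \<and> dsj C (cd C f) (cd C g)"

definition is_parsum :: "('o,'m,'z) psc_scheme \<Rightarrow> bool" where
  "is_parsum C \<longleftrightarrow> is_EMcat C \<and> tame C \<and>
     zer C \<in> ob C \<and> supp C (zer C) = {} \<and>
     \<comment> \<open>+ is a functor on the full subcategory of disjointly supported pairs\<close>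
     (\<forall>X\<in>ob C. \<forall>Y\<in>ob C. dsj C X Y \<longrightarrow> pls C X Y \<in> ob C) \<and>
     (\<forall>f\<in>ar C. \<forall>g\<in>ar C. dsjm C f g \<longrightarrow>
        plsm C f g \<in> hom C (pls C (dm C f) (dm C g)) (pls C (cd C f) (cd C g))) \<and>
     (\<forall>X\<in>ob C. \<forall>Y\<in>ob C. dsj C X Y \<longrightarrow> plsm C (idn C X) (idn C Y) = idn C (pls C X Y)) \<and>
     (\<forall>f\<in>ar C. \<forall>g\<in>ar C. \<forall>f'\<in>ar C. \<forall>g'\<in>ar C.
        dm C f' = cd C f \<longrightarrow> dm C g' = cd C g \<longrightarrow> dsjm C f g \<longrightarrow> dsjm C f' g' \<longrightarrow>
        plsm C (cmp C f' f) (cmp C g' g) = cmp C (plsm C f' g') (plsm C f g)) \<and>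
     \<comment> \<open>strictly unital\<close>
     (\<forall>X\<in>ob C. pls C X (zer C) = X \<and> pls C (zer C) X = X) \<and>
     (\<forall>f\<in>ar C. plsm C f (idn C (zer C)) = f \<and> plsm C (idn C (zer C)) f = f) \<and>
     \<comment> \<open>associative\<close>
     (\<forall>X\<in>ob C. \<forall>Y\<in>ob C. \<forall>Z\<in>ob C. dsj C X Y \<longrightarrow> dsj C X Z \<longrightarrow> dsj C Y Z \<longrightarrow>
        pls C (pls C X Y) Z = pls C X (pls C Y Z)) \<and>
     (\<forall>f\<in>ar C. \<forall>g\<in>ar C. \<forall>h\<in>ar C. dsjm C f g \<longrightarrow> dsjm C f h \<longrightarrow> dsjm C g h \<longrightarrow>
        plsm C (plsm C f g) h = plsm C f (plsm C g h)) \<and>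
     \<comment> \<open>commutative\<close>
     (\<forall>X\<in>ob C. \<forall>Y\<in>ob C. dsj C X Y \<longrightarrow> pls C X Y = pls C Y X) \<and>
     (\<forall>f\<in>ar C. \<forall>g\<in>ar C. dsjm C f g \<longrightarrow> plsm C f g = plsm C g f) \<and>
     \<comment> \<open>EM-equivariant\<close>
     (\<forall>u\<in>injs. \<forall>X\<in>ob C. \<forall>Y\<in>ob C. dsj C X Y \<longrightarrow>
        act C u (pls C X Y) = pls C (act C u X) (act C u Y)) \<and>
     (\<forall>u\<in>injs. \<forall>f\<in>ar C. \<forall>g\<in>ar C. dsjm C f g \<longrightarrow>
        actm C u (plsm C f g) = plsm C (actm C u f) (actm C u g)) \<and>
     (\<forall>u\<in>injs. \<forall>v\<in>injs. \<forall>X\<in>ob C. \<forall>Y\<in>ob C. dsj C X Y \<longrightarrow>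
        trn C v u (pls C X Y) = plsm C (trn C v u X) (trn C v u Y))"

definition is_psmor ::
  "('o,'m,'z) psc_scheme \<Rightarrow> ('p,'n,'y) psc_scheme \<Rightarrow> ('o \<Rightarrow> 'p) \<Rightarrow> ('m \<Rightarrow> 'n) \<Rightarrow> bool" where
  "is_psmor C D Fo Fm \<longleftrightarrow> is_functor C D Fo Fm \<and>
     (\<forall>u\<in>injs. \<forall>X\<in>ob C. Fo (act C u X) = act D u (Fo X)) \<and>
     (\<forall>u\<in>injs. \<forall>f\<in>ar C. Fm (actm C u f) = actm D u (Fm f)) \<and>
     (\<forall>u\<in>injs. \<forall>v\<in>injs. \<forall>X\<in>ob C. Fm (trn C v u X) = trn D v u (Fo X)) \<and>
     Fo (zer C) = zer D \<and>
     (\<forall>X\<in>ob C. \<forall>Y\<in>ob C. dsj C X Y \<longrightarrow> Fo (pls C X Y) = pls D (Fo X) (Fo Y)) \<and>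
     (\<forall>f\<in>ar C. \<forall>g\<in>ar C. dsjm C f g \<longrightarrow> Fm (plsm C f g) = plsm D (Fm f) (Fm g))"

definition is_permutative ::
  "('o,'m,'z) cat_scheme \<Rightarrow> ('o \<Rightarrow> 'o \<Rightarrow> 'o) \<Rightarrow> ('m \<Rightarrow> 'm \<Rightarrow> 'm) \<Rightarrow> 'o \<Rightarrow> ('o \<Rightarrow> 'o \<Rightarrow> 'm) \<Rightarrow> bool" where
  "is_permutative C tob tar U S \<longleftrightarrow> is_cat C \<and>
     (\<forall>X\<in>ob C. \<forall>Y\<in>ob C. tob X Y \<in> ob C) \<and>
     (\<forall>f\<in>ar C. \<forall>g\<in>ar C. tar f g \<in> hom C (tob (dm C f) (dm C g)) (tob (cd C f) (cd C g))) \<and>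
     (\<forall>X\<in>ob C. \<forall>Y\<in>ob C. tar (idn C X) (idn C Y) = idn C (tob X Y)) \<and>
     (\<forall>f\<in>ar C. \<forall>g\<in>ar C. \<forall>f'\<in>ar C. \<forall>g'\<in>ar C. dm C f' = cd C f \<longrightarrow> dm C g' = cd C g \<longrightarrow>
        tar (cmp C f' f) (cmp C g' g) = cmp C (tar f' g') (tar f g)) \<and>
     U \<in> ob C \<and>
     (\<forall>X\<in>ob C. tob U X = X \<and> tob X U = X) \<and>
     (\<forall>f\<in>ar C. tar (idn C U) f = f \<and> tar f (idn C U) = f) \<and>
     (\<forall>X\<in>ob C. \<forall>Y\<in>ob C. \<forall>Z\<in>ob C. tob (tob X Y) Z = tob X (tob Y Z)) \<and>
     (\<forall>f\<in>ar C. \<forall>g\<in>ar C. \<forall>h\<in>ar C. tar (tar f g) h = tar f (tar g h)) \<and>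
     (\<forall>X\<in>ob C. \<forall>Y\<in>ob C. S X Y \<in> hom C (tob X Y) (tob Y X)) \<and>
     (\<forall>f\<in>ar C. \<forall>g\<in>ar C.
        cmp C (S (cd C f) (cd C g)) (tar f g) = cmp C (tar g f) (S (dm C f) (dm C g))) \<and>
     (\<forall>X\<in>ob C. \<forall>Y\<in>ob C. cmp C (S Y X) (S X Y) = idn C (tob X Y)) \<and>
     (\<forall>X\<in>ob C. \<forall>Y\<in>ob C. \<forall>Z\<in>ob C.
        S X (tob Y Z) = cmp C (tar (idn C Y) (S X Z)) (tar (S X Y) (idn C Z))) \<and>
     (\<forall>X\<in>ob C. S X U = idn C X)"

definition is_strict_sym_monoidal ::
  "('o,'m,'z) cat_scheme \<Rightarrow> ('o \<Rightarrow> 'o \<Rightarrow> 'o) \<Rightarrow> ('m \<Rightarrow> 'm \<Rightarrow> 'm) \<Rightarrow> 'o \<Rightarrow> ('o \<Rightarrow> 'o \<Rightarrow> 'm) \<Rightarrow>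
   ('p,'n,'y) cat_scheme \<Rightarrow> ('p \<Rightarrow> 'p \<Rightarrow> 'p) \<Rightarrow> ('n \<Rightarrow> 'n \<Rightarrow> 'n) \<Rightarrow> 'p \<Rightarrow> ('p \<Rightarrow> 'p \<Rightarrow> 'n) \<Rightarrow>
   ('o \<Rightarrow> 'p) \<Rightarrow> ('m \<Rightarrow> 'n) \<Rightarrow> bool" where
  "is_strict_sym_monoidal C tob tar U S D tob' tar' U' S' Fo Fm \<longleftrightarrow>
     is_functor C D Fo Fm \<and>
     (\<forall>X\<in>ob C. \<forall>Y\<in>ob C. Fo (tob X Y) = tob' (Fo X) (Fo Y)) \<and>
     (\<forall>f\<in>ar C. \<forall>g\<in>ar C. Fm (tar f g) = tar' (Fm f) (Fm g)) \<and>
     Fo U = U' \<and>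
     (\<forall>X\<in>ob C. \<forall>Y\<in>ob C. Fm (S X Y) = S' (Fo X) (Fo Y))"

text \<open>Sequences are lists, indexed from 0; an injection phi : m x omega \<rightarrow> omega is a
  function nat \<Rightarrow> nat \<Rightarrow> nat injective on {..<m} x UNIV.\<close>

type_synonym ('m) triple = "(nat \<Rightarrow> nat \<Rightarrow> nat) \<times> 'm \<times> (nat \<Rightarrow> nat \<Rightarrow> nat)"
type_synonym ('o,'m) sarr = "'o list \<times> 'o list \<times> 'm triple set"

definition injm :: "nat \<Rightarrow> (nat \<Rightarrow> nat \<Rightarrow> nat) \<Rightarrow> bool" where
  "injm m \<phi> \<longleftrightarrow> inj_on (\<lambda>(i,x). \<phi> i x) ({..<m} \<times> UNIV)"

definition imm :: "nat \<Rightarrow> (nat \<Rightarrow> nat \<Rightarrow> nat) \<Rightarrow> nat set" where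
  "imm m \<phi> = (\<lambda>(i,x). \<phi> i x) ` ({..<m} \<times> UNIV)"

definition push :: "('o,'m,'z) psc_scheme \<Rightarrow> (nat \<Rightarrow> nat \<Rightarrow> nat) \<Rightarrow> 'o list \<Rightarrow> 'o" where
  "push C \<phi> Xs = foldr (\<lambda>i acc. pls C (act C (\<phi> i) (Xs ! i)) acc) [0..<length Xs] (zer C)"

definition pushm :: "('o,'m,'z) psc_scheme \<Rightarrow> (nat \<Rightarrow> nat \<Rightarrow> nat) \<Rightarrow> (nat \<Rightarrow> nat \<Rightarrow> nat) \<Rightarrow> 'o list \<Rightarrow> 'm" where
  "pushm C \<phi>' \<phi> Xs =
     foldr (\<lambda>i acc. plsm C (trn C (\<phi>' i) (\<phi> i) (Xs ! i)) acc) [0..<length Xs] (idn C (zer C))"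

definition valid :: "('o,'m,'z) psc_scheme \<Rightarrow> 'o list \<Rightarrow> 'o list \<Rightarrow> 'm triple \<Rightarrow> bool" where
  "valid C Xs Ys t = (case t of (\<psi>, f, \<phi>) \<Rightarrow>
     injm (length Xs) \<phi> \<and> injm (length Ys) \<psi> \<and> f \<in> hom C (push C \<phi> Xs) (push C \<psi> Ys))"

definition srel :: "('o,'m,'z) psc_scheme \<Rightarrow> 'o list \<Rightarrow> 'o list \<Rightarrow> 'm triple \<Rightarrow> 'm triple \<Rightarrow> bool" where
  "srel C Xs Ys t t' = (case t of (\<psi>, f, \<phi>) \<Rightarrow> case t' of (\<psi>', f', \<phi>') \<Rightarrow>
     f' = cmp C (pushm C \<psi>' \<psi> Ys) (cmp C f (pushm C \<phi> \<phi>' Xs)))"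

definition cls :: "('o,'m,'z) psc_scheme \<Rightarrow> 'o list \<Rightarrow> 'o list \<Rightarrow> 'm triple \<Rightarrow> 'm triple set" where
  "cls C Xs Ys t = {t'. valid C Xs Ys t' \<and> srel C Xs Ys t t'}"

definition rep :: "('o,'m) sarr \<Rightarrow> 'm triple" where
  "rep a = (SOME t. t \<in> snd (snd a))"

definition phi0 :: "nat \<Rightarrow> nat \<Rightarrow> nat" where
  "phi0 i x = prod_encode (i, x)"

definition sigma_cat :: "('o,'m,'z) psc_scheme \<Rightarrow> ('o list, ('o,'m) sarr) cat" where
  "sigma_cat C = \<lparr>
     ob = lists (ob C),
     ar = {(Xs, Ys, cls C Xs Ys t) | Xs Ys t.
             Xs \<in> lists (ob C) \<and> Ys \<in> lists (ob C) \<and> valid C Xs Ys t},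
     dm = (\<lambda>a. fst a),
     cd = (\<lambda>a. fst (snd a)),
     idn = (\<lambda>Xs. (Xs, Xs, cls C Xs Xs (phi0, idn C (push C phi0 Xs), phi0))),
     cmp = (\<lambda>b a. case rep b of (\<rho>, g, \<theta>) \<Rightarrow> case rep a of (\<psi>, f, \<phi>) \<Rightarrow>
              (fst a, fst (snd b),
               cls C (fst a) (fst (snd b))
                 (\<rho>, cmp C g (cmp C (pushm C \<theta> \<psi> (fst (snd a))) f), \<phi>))) \<rparr>"

definition psum :: "nat \<Rightarrow> (nat \<Rightarrow> nat \<Rightarrow> nat) \<Rightarrow> (nat \<Rightarrow> nat \<Rightarrow> nat) \<Rightarrow> nat \<Rightarrow> nat \<Rightarrow> nat" where
  "psum m \<phi> \<theta> = (\<lambda>i x. if i < m then \<phi> i x else \<theta> (i - m) x)"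

definition tens_reps :: "('o,'m) sarr \<Rightarrow> ('o,'m) sarr \<Rightarrow> ('m triple \<times> 'm triple) set" where
  "tens_reps a b = {(t, s). t \<in> snd (snd a) \<and> s \<in> snd (snd b) \<and>
     (case t of (\<psi>, f, \<phi>) \<Rightarrow> case s of (\<rho>, g, \<theta>) \<Rightarrow>
        imm (length (fst a)) \<phi> \<inter> imm (length (fst b)) \<theta> = {} \<and>
        imm (length (fst (snd a))) \<psi> \<inter> imm (length (fst (snd b))) \<rho> = {})}"

definition tens_of :: "('o,'m,'z) psc_scheme \<Rightarrow> ('o,'m) sarr \<Rightarrow> ('o,'m) sarr \<Rightarrow>
    'm triple \<times> 'm triple \<Rightarrow> ('o,'m) sarr" where
  "tens_of C a b p = (case p of ((\<psi>, f, \<phi>), (\<rho>, g, \<theta>)) \<Rightarrow>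
     (fst a @ fst b, fst (snd a) @ fst (snd b),
      cls C (fst a @ fst b) (fst (snd a) @ fst (snd b))
        (psum (length (fst (snd a))) \<psi> \<rho>, plsm C f g, psum (length (fst a)) \<phi> \<theta>)))"

definition sigma_tens :: "('o,'m,'z) psc_scheme \<Rightarrow> ('o,'m) sarr \<Rightarrow> ('o,'m) sarr \<Rightarrow> ('o,'m) sarr" where
  "sigma_tens C a b = tens_of C a b (SOME p. p \<in> tens_reps a b)"

definition phibar :: "nat \<Rightarrow> nat \<Rightarrow> (nat \<Rightarrow> nat \<Rightarrow> nat) \<Rightarrow> nat \<Rightarrow> nat \<Rightarrow> nat" where
  "phibar m n \<phi> = (\<lambda>i x. if i < n then \<phi> (i + m) x else \<phi> (i - n) x)"

definition tau_of :: "('o,'m,'z) psc_scheme \<Rightarrow> 'o list \<Rightarrow> 'o list \<Rightarrow> (nat \<Rightarrow> nat \<Rightarrow> nat) \<Rightarrow> ('o,'m) sarr" where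
  "tau_of C Xs Ys \<phi> =
     (Xs @ Ys, Ys @ Xs,
      cls C (Xs @ Ys) (Ys @ Xs) (phibar (length Xs) (length Ys) \<phi>, idn C (push C \<phi> (Xs @ Ys)), \<phi>))"

definition sigma_tau :: "('o,'m,'z) psc_scheme \<Rightarrow> 'o list \<Rightarrow> 'o list \<Rightarrow> ('o,'m) sarr" where
  "sigma_tau C Xs Ys = tau_of C Xs Ys phi0"

definition sigma_fun :: "('p,'n,'y) psc_scheme \<Rightarrow> ('o \<Rightarrow> 'p) \<Rightarrow> ('m \<Rightarrow> 'n) \<Rightarrow> ('o,'m) sarr \<Rightarrow> ('p,'n) sarr" where
  "sigma_fun D Fo Fm a = (case rep a of (\<psi>, f, \<phi>) \<Rightarrow>
     (map Fo (fst a), map Fo (fst (snd a)),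
      cls D (map Fo (fst a)) (map Fo (fst (snd a))) (\<psi>, Fm f, \<phi>)))"

end

theory Submission
  imports Defs "HOL-Library.Infinite_Set"
begin

text \<open>An arrow of \<open>\<Sigma>(C)\<close> is a class of triples \<open>(\<psi>, f, \<phi>)\<close>, and every class contains a triple
  along any prescribed pair of injections: the \<open>C\<close>-component is transported by the
  isomorphisms \<open>[\<psi>', \<psi>]\<close> and \<open>[\<phi>, \<phi>']\<close>. Choosing representatives along injections with
  disjoint images makes the sum \<open>f + g\<close> defined. Pushing a concatenated sequence along
  \<open>\<phi> + \<theta>\<close> gives the sum of the pushes along \<open>\<phi>\<close> and \<open>\<theta>\<close>, because the pushes are supported
  in the images of \<open>\<phi>\<close> and \<open>\<theta>\<close>; as \<open>+\<close> is a functor, the class of \<open>(\<psi> + \<rho>, f + g, \<phi> + \<theta>)\<close>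
  therefore does not depend on the choice. The axioms of a permutative category reduce to
  those of \<open>+\<close> in \<open>C\<close>: identities and symmetries of \<open>\<Sigma>(C)\<close> have identity \<open>C\<close>-component, so
  their coherence is combinatorics of injections of \<open>m \<times> \<omega>\<close>. A morphism \<open>F\<close> of parsummable
  categories commutes with all of this because it strictly preserves the action, the
  isomorphisms \<open>[v, u]\<close>, \<open>0\<close> and \<open>+\<close>.\<close>

section \<open>Injections of \<open>m \<times> \<omega>\<close>\<close>

lemma finite_inj_on_extends_to_bij:
  fixes u :: "nat \<Rightarrow> nat"
  assumes "finite A" "inj_on u A"
  obtains s where "bij s" "\<forall>a\<in>A. s a = u a"
proof -
  have "infinite (- A)" "infinite (- (u ` A))"
    using assms(1) by (simp_all add: Compl_eq_Diff_UNIV Diff_infinite_finite)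
  then have "bij_betw (enumerate (- A)) UNIV (- A)" "bij_betw (enumerate (- (u ` A))) UNIV (- (u ` A))"
    by (simp_all add: bij_enumerate)
  then obtain g where g: "bij_betw g (- A) (- (u ` A))"
    using bij_betw_trans bij_betw_the_inv_into by blast
  define s where "s x = (if x \<in> A then u x else g x)" for x
  have "bij_betw s A (u ` A)"
    using assms(2) by (simp add: bij_betw_def inj_on_def s_def)
  moreover have "bij_betw s (- A) (- (u ` A))"
    using g by (rule bij_betw_cong[THEN iffD1, rotated]) (simp add: s_def)
  ultimately have "bij_betw s (A \<union> - A) (u ` A \<union> - (u ` A))"
    by (rule bij_betw_combine) auto
  then show ?thesis
    using that by (simp add: s_def)
qed

definition rows_image :: "(nat \<Rightarrow> nat \<Rightarrow> nat) \<Rightarrow> nat set \<Rightarrow> nat set" where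
  "rows_image \<phi> S = (\<Union>i\<in>S. range (\<phi> i))"

lemma imm_eq_rows_image: "imm m \<phi> = rows_image \<phi> {..<m}"
  unfolding imm_def rows_image_def by (auto simp: image_iff)

lemma injm_iff:
  "injm m \<phi> \<longleftrightarrow> (\<forall>i<m. inj (\<phi> i)) \<and> (\<forall>i<m. \<forall>j<m. i \<noteq> j \<longrightarrow> range (\<phi> i) \<inter> range (\<phi> j) = {})"
proof
  assume "injm m \<phi>"
  then have I: "(i, x) = (j, y)" if "i < m" "j < m" "\<phi> i x = \<phi> j y" for i x j y
    unfolding injm_def by (rule inj_onD) (use that in auto)
  show "(\<forall>i<m. inj (\<phi> i)) \<and> (\<forall>i<m. \<forall>j<m. i \<noteq> j \<longrightarrow> range (\<phi> i) \<inter> range (\<phi> j) = {})"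
  proof (intro conjI allI impI)
    fix i assume "i < m"
    then show "inj (\<phi> i)" using I by (intro injI) simp
  next
    fix i j assume "i < m" "j < m" "i \<noteq> j"
    then show "range (\<phi> i) \<inter> range (\<phi> j) = {}"
      using I by (metis (no_types, lifting) disjoint_iff prod.inject rangeE)
  qed
next
  assume a: "(\<forall>i<m. inj (\<phi> i)) \<and> (\<forall>i<m. \<forall>j<m. i \<noteq> j \<longrightarrow> range (\<phi> i) \<inter> range (\<phi> j) = {})"
  show "injm m \<phi>" unfolding injm_def
  proof (rule inj_onI, clarify)
    fix i x j y assume ij: "i < m" "j < m" and e: "\<phi> i x = \<phi> j y"
    show "i = j \<and> x = y"
    proof (cases "i = j")
      case True then show ?thesis using a ij e by (auto dest: injD)
    next
      case False
      then have "range (\<phi> i) \<inter> range (\<phi> j) = {}" using a ij by blast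
      then show ?thesis using e by (metis disjoint_iff rangeI)
    qed
  qed
qed

lemma injm_inj: "injm m \<phi> \<Longrightarrow> i < m \<Longrightarrow> inj (\<phi> i)"
  by (simp add: injm_iff)

lemma injm_rows_image_disjoint:
  "injm m \<phi> \<Longrightarrow> S \<subseteq> {..<m} \<Longrightarrow> T \<subseteq> {..<m} \<Longrightarrow> S \<inter> T = {} \<Longrightarrow>
    rows_image \<phi> S \<inter> rows_image \<phi> T = {}"
  unfolding injm_iff rows_image_def by blast

lemma injm_cong: "(\<And>i. i < m \<Longrightarrow> \<phi> i = \<phi>' i) \<Longrightarrow> injm m \<phi> = injm m \<phi>'"
  by (simp add: injm_iff)

lemma injm_mono: "injm m \<phi> \<Longrightarrow> k \<le> m \<Longrightarrow> injm k \<phi>"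
  by (simp add: injm_iff)

lemma injm_shift: "injm m \<phi> \<Longrightarrow> k + n \<le> m \<Longrightarrow> injm n (\<lambda>i. \<phi> (i + k))"
  unfolding injm_iff by auto

lemma injm_Suc:
  assumes "injm (Suc n) \<phi>"
  shows "inj (\<phi> 0)" "injm n (\<lambda>i. \<phi> (Suc i))" "range (\<phi> 0) \<inter> imm n (\<lambda>i. \<phi> (Suc i)) = {}"
proof -
  have "range (\<phi> 0) \<inter> range (\<phi> (Suc i)) = {}" if "i < n" for i
    using assms that unfolding injm_iff by (metis Suc_less_eq nat.distinct(1) zero_less_Suc)
  then show "range (\<phi> 0) \<inter> imm n (\<lambda>i. \<phi> (Suc i)) = {}"
    unfolding imm_eq_rows_image rows_image_def by blast
  show "inj (\<phi> 0)" "injm n (\<lambda>i. \<phi> (Suc i))"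
    using assms unfolding injm_iff by auto
qed

lemma imm_Suc: "imm (Suc n) \<phi> = range (\<phi> 0) \<union> imm n (\<lambda>i. \<phi> (Suc i))"
  unfolding imm_eq_rows_image rows_image_def by (auto simp: lessThan_Suc_eq_insert_0)

lemma imm_shift: "imm n (\<lambda>i. \<phi> (i + k)) = rows_image \<phi> {k..<k+n}"
proof -
  have "{k..<k+n} = (\<lambda>i. i + k) ` {..<n}"
    using image_add_atLeastLessThan[of k 0 n] by (simp add: lessThan_atLeast0 add.commute)
  then show ?thesis
    unfolding imm_eq_rows_image rows_image_def by simp
qed

lemma psum_less: "i < m \<Longrightarrow> psum m \<phi> \<theta> i = \<phi> i"
  by (simp add: psum_def)

lemma psum_shift: "(\<lambda>i. psum m \<phi> \<theta> (i + m)) = \<theta>"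
  by (simp add: psum_def)

lemma psum_0: "psum 0 \<phi> \<theta> = \<theta>"
  by (simp add: psum_def fun_eq_iff)

lemma psum_shift_self: "psum k \<phi> (\<lambda>i. \<phi> (i + k)) = \<phi>"
  by (auto simp: psum_def fun_eq_iff)

lemma psum_assoc: "psum (m + n) (psum m \<phi> \<theta>) \<kappa> = psum m \<phi> (psum n \<theta> \<kappa>)"
  by (auto simp: psum_def fun_eq_iff)

lemma injm_psum:
  assumes "injm m \<phi>" "injm n \<theta>" "imm m \<phi> \<inter> imm n \<theta> = {}"
  shows "injm (m + n) (psum m \<phi> \<theta>)"
  unfolding injm_iff
proof (intro conjI allI impI)
  fix i assume "i < m + n"
  then show "inj (psum m \<phi> \<theta> i)"
    using assms(1,2) by (cases "i < m") (auto simp: psum_def injm_iff)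
next
  fix i j assume i: "i < m + n" and j: "j < m + n" and ij: "i \<noteq> j"
  have r1: "range (\<phi> i) \<subseteq> imm m \<phi>" if "i < m" for i
    using that by (auto simp: imm_eq_rows_image rows_image_def)
  have r2: "range (\<theta> i) \<subseteq> imm n \<theta>" if "i < n" for i
    using that by (auto simp: imm_eq_rows_image rows_image_def)
  show "range (psum m \<phi> \<theta> i) \<inter> range (psum m \<phi> \<theta> j) = {}"
  proof (cases "i < m"; cases "j < m")
    assume "i < m" "j < m" then show ?thesis
      using assms(1) ij by (simp add: psum_def injm_iff)
  next
    assume "i < m" "\<not> j < m"
    moreover have "j - m < n" using j \<open>\<not> j < m\<close> by simp
    ultimately show ?thesis
      using r1[of i] r2[of "j - m"] assms(3) by (auto simp: psum_def)
  next
    assume "\<not> i < m" "j < m"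
    moreover have "i - m < n" using i \<open>\<not> i < m\<close> by simp
    ultimately show ?thesis
      using r1[of j] r2[of "i - m"] assms(3) by (auto simp: psum_def)
  next
    assume "\<not> i < m" "\<not> j < m"
    then have "i - m < n" "j - m < n" "i - m \<noteq> j - m" using i j ij by auto
    then show ?thesis using \<open>\<not> i < m\<close> \<open>\<not> j < m\<close> assms(2) by (simp add: psum_def injm_iff)
  qed
qed

lemma imm_psum: "imm (m + n) (psum m \<phi> \<theta>) = imm m \<phi> \<union> imm n \<theta>"
proof -
  have "imm (m + n) (psum m \<phi> \<theta>) = rows_image (psum m \<phi> \<theta>) ({..<m} \<union> {m..<m+n})"
    by (simp add: imm_eq_rows_image ivl_disj_un(8))
  also have "\<dots> = rows_image (psum m \<phi> \<theta>) {..<m} \<union> rows_image (psum m \<phi> \<theta>) {m..<m+n}"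
    by (simp add: rows_image_def)
  also have "rows_image (psum m \<phi> \<theta>) {..<m} = imm m \<phi>"
    by (simp add: imm_eq_rows_image rows_image_def psum_def)
  also have "rows_image (psum m \<phi> \<theta>) {m..<m+n} = imm n \<theta>"
    using imm_shift[of n "psum m \<phi> \<theta>" m] by (simp add: psum_shift)
  finally show ?thesis .
qed

lemma phibar_eq_psum: "phibar m n \<phi> = psum n (\<lambda>i. \<phi> (i + m)) \<phi>"
  by (simp add: phibar_def psum_def fun_eq_iff)

lemma phibar_0: "phibar m 0 \<phi> = \<phi>"
  by (simp add: phibar_def fun_eq_iff)

lemma phibar_psum: "i < n + m \<Longrightarrow> phibar m n (psum m \<phi> \<theta>) i = psum n \<theta> \<phi> i"
  by (auto simp: phibar_def psum_def fun_eq_iff)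

lemma phibar_phibar: "i < m + n \<Longrightarrow> phibar n m (phibar m n \<phi>) i = \<phi> i"
  by (auto simp: phibar_def fun_eq_iff)

lemma psum_shift_phibar:
  "psum b (\<lambda>i. \<phi> (i + a)) (psum a \<phi> (\<lambda>i. \<phi> (i + (a + b)))) =
    psum (b + a) (phibar a b \<phi>) (\<lambda>i. \<phi> (i + (a + b)))"
  by (auto simp: psum_def phibar_def fun_eq_iff)

lemma psum_shift_phibar_psum:
  "i < b + c + a \<Longrightarrow>
    psum b (\<lambda>i. \<phi> (i + a)) (phibar a c (psum a \<phi> (\<lambda>i. \<phi> (i + (a + b))))) i = phibar a (b + c) \<phi> i"
  by (auto simp: psum_def phibar_def fun_eq_iff)

lemma injm_split:
  assumes "injm (m + n) \<phi>"
  shows "injm m \<phi>" "injm n (\<lambda>i. \<phi> (i + m))" "imm m \<phi> \<inter> imm n (\<lambda>i. \<phi> (i + m)) = {}"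
proof -
  show "injm m \<phi>" "injm n (\<lambda>i. \<phi> (i + m))"
    using injm_mono[OF assms] injm_shift[OF assms, of m n] by simp_all
  have "rows_image \<phi> {..<m} \<inter> rows_image \<phi> {m..<m+n} = {}"
    by (rule injm_rows_image_disjoint[OF assms]) auto
  then show "imm m \<phi> \<inter> imm n (\<lambda>i. \<phi> (i + m)) = {}"
    by (simp add: imm_shift imm_eq_rows_image)
qed

lemma injm_phibar: "injm (m + n) \<phi> \<Longrightarrow> injm (n + m) (phibar m n \<phi>)"
  unfolding phibar_eq_psum using injm_split by (metis Int_commute injm_psum)

lemma imm_phibar: "imm (n + m) (phibar m n \<phi>) = imm (m + n) \<phi>"
proof -
  have "imm (n + m) (phibar m n \<phi>) = rows_image \<phi> ({m..<m+n} \<union> {..<m})"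
    unfolding phibar_eq_psum imm_psum by (simp add: imm_shift imm_eq_rows_image rows_image_def)
  also have "{m..<m+n} \<union> {..<m} = {..<m+n}"
    by auto
  finally show ?thesis
    by (simp add: imm_eq_rows_image)
qed

lemma injm_phi0: "injm m phi0"
  unfolding injm_iff phi0_def inj_def by (auto simp: prod_encode_eq)

lemma phi0_rows_image_disjoint: "S \<inter> T = {} \<Longrightarrow> rows_image phi0 S \<inter> rows_image phi0 T = {}"
  unfolding rows_image_def phi0_def by (auto simp: prod_encode_eq)

text \<open>Representing arrows of \<open>\<Sigma>(C)\<close> along different stripes makes the sums of their
  representatives defined.\<close>

definition stripe :: "nat \<Rightarrow> nat \<Rightarrow> nat \<Rightarrow> nat" where
  "stripe k i x = 3 * prod_encode (i, x) + k"

lemma injm_stripe: "injm m (stripe k)"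
  unfolding injm_iff stripe_def inj_def by (auto simp: prod_encode_eq)

lemma stripe_disjoint: "k \<noteq> k' \<Longrightarrow> k < 3 \<Longrightarrow> k' < 3 \<Longrightarrow> imm m (stripe k) \<inter> imm m' (stripe k') = {}"
  unfolding imm_def stripe_def by auto presburger

section \<open>Parsummable categories\<close>

lemma push_Nil: "push C \<phi> [] = zer C"
  by (simp add: push_def)

lemma pushm_Nil: "pushm C \<phi>' \<phi> [] = idn C (zer C)"
  by (simp add: pushm_def)

lemma upt_0_Suc_map: "[0..<Suc n] = 0 # map Suc [0..<n]"
  by (simp add: upt_conv_Cons map_Suc_upt del: upt_Suc)

lemma push_Cons: "push C \<phi> (X # Xs) = pls C (act C (\<phi> 0) X) (push C (\<lambda>i. \<phi> (Suc i)) Xs)"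
  unfolding push_def by (simp add: upt_0_Suc_map foldr_map comp_def del: upt_Suc)

lemma pushm_Cons: "pushm C \<phi>' \<phi> (X # Xs) =
    plsm C (trn C (\<phi>' 0) (\<phi> 0) X) (pushm C (\<lambda>i. \<phi>' (Suc i)) (\<lambda>i. \<phi> (Suc i)) Xs)"
  unfolding pushm_def by (simp add: upt_0_Suc_map foldr_map comp_def del: upt_Suc)

lemma push_cong: "(\<And>i. i < length Xs \<Longrightarrow> \<phi> i = \<phi>' i) \<Longrightarrow> push C \<phi> Xs = push C \<phi>' Xs"
  unfolding push_def by (rule foldr_cong) auto

lemma pushm_cong:
  "(\<And>i. i < length Xs \<Longrightarrow> \<phi> i = \<phi>2 i) \<Longrightarrow> (\<And>i. i < length Xs \<Longrightarrow> \<psi> i = \<psi>2 i) \<Longrightarrow>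
    pushm C \<psi> \<phi> Xs = pushm C \<psi>2 \<phi>2 Xs"
  unfolding pushm_def by (rule foldr_cong) auto

locale parsummable =
  fixes C :: "('o,'m,'z) psc_scheme"
  assumes parsum: "is_parsum C"
begin

lemma is_EMcat_C: "is_EMcat C"
  using parsum by (simp add: is_parsum_def)

lemma is_cat_C: "is_cat C"
  using is_EMcat_C by (simp add: is_EMcat_def)

lemma idn_in_hom: "X \<in> ob C \<Longrightarrow> idn C X \<in> hom C X X"
  using is_cat_C unfolding is_cat_def by blast

lemma cmp_in_hom: "f \<in> hom C X Y \<Longrightarrow> g \<in> hom C Y Z \<Longrightarrow> cmp C g f \<in> hom C X Z"
  using is_cat_C unfolding is_cat_def hom_def by blast

lemma cmp_idn_left: "f \<in> hom C X Y \<Longrightarrow> cmp C (idn C Y) f = f"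
  using is_cat_C unfolding is_cat_def hom_def by blast

lemma cmp_idn_right: "f \<in> hom C X Y \<Longrightarrow> cmp C f (idn C X) = f"
  using is_cat_C unfolding is_cat_def hom_def by blast

lemma cmp_assoc: "f \<in> hom C X Y \<Longrightarrow> g \<in> hom C Y Z \<Longrightarrow> h \<in> hom C Z W \<Longrightarrow>
    cmp C h (cmp C g f) = cmp C (cmp C h g) f"
  using is_cat_C unfolding is_cat_def hom_def by blast

lemma act_in_ob:
  assumes "inj u" "X \<in> ob C"
  shows "act C u X \<in> ob C"
proof -
  have "is_functor C C (act C u) (actm C u)"
    using is_EMcat_C assms(1) by (simp add: is_EMcat_def injs_def)
  with assms(2) show ?thesis
    by (simp add: is_functor_def)
qed

lemma act_comp: "inj u \<Longrightarrow> inj v \<Longrightarrow> X \<in> ob C \<Longrightarrow> act C (u \<circ> v) X = act C u (act C v X)"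
  using is_EMcat_C unfolding is_EMcat_def injs_def by blast

lemma trn_in_hom: "inj u \<Longrightarrow> inj v \<Longrightarrow> X \<in> ob C \<Longrightarrow> trn C v u X \<in> hom C (act C u X) (act C v X)"
  using is_EMcat_C unfolding is_EMcat_def injs_def by blast

lemma trn_self: "inj u \<Longrightarrow> X \<in> ob C \<Longrightarrow> trn C u u X = idn C (act C u X)"
  using is_EMcat_C unfolding is_EMcat_def injs_def by blast

lemma cmp_trn: "inj u \<Longrightarrow> inj v \<Longrightarrow> inj w \<Longrightarrow> X \<in> ob C \<Longrightarrow>
    cmp C (trn C w v X) (trn C v u X) = trn C w u X"
  using is_EMcat_C unfolding is_EMcat_def injs_def by blast

lemma tame_ob: "X \<in> ob C \<Longrightarrow> \<exists>A. finite A \<and> supported_on C X A"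
  using parsum unfolding is_parsum_def tame_def by (elim conjE) blast

lemma zer_in_ob: "zer C \<in> ob C"
  using parsum by (simp add: is_parsum_def)

lemma supp_zer: "supp C (zer C) = {}"
  using parsum by (simp add: is_parsum_def)

lemma pls_in_ob: "X \<in> ob C \<Longrightarrow> Y \<in> ob C \<Longrightarrow> dsj C X Y \<Longrightarrow> pls C X Y \<in> ob C"
  using parsum by (simp add: is_parsum_def)

lemma plsm_in_hom: "f \<in> hom C X Y \<Longrightarrow> g \<in> hom C X' Y' \<Longrightarrow> dsj C X X' \<Longrightarrow> dsj C Y Y' \<Longrightarrow>
    plsm C f g \<in> hom C (pls C X X') (pls C Y Y')"
  using parsum unfolding is_parsum_def dsjm_def hom_def by (elim conjE) blast

lemma plsm_idn: "X \<in> ob C \<Longrightarrow> Y \<in> ob C \<Longrightarrow> dsj C X Y \<Longrightarrow>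
    plsm C (idn C X) (idn C Y) = idn C (pls C X Y)"
  using parsum by (simp add: is_parsum_def)

lemma plsm_cmp:
  assumes "f \<in> hom C X Y" "f' \<in> hom C Y Z" "g \<in> hom C X' Y'" "g' \<in> hom C Y' Z'"
    and "dsj C X X'" "dsj C Y Y'" "dsj C Z Z'"
  shows "plsm C (cmp C f' f) (cmp C g' g) = cmp C (plsm C f' g') (plsm C f g)"
  using parsum assms unfolding is_parsum_def hom_def dsjm_def by auto

lemma pls_zer: "X \<in> ob C \<Longrightarrow> pls C X (zer C) = X" "X \<in> ob C \<Longrightarrow> pls C (zer C) X = X"
  using parsum by (simp_all add: is_parsum_def)

lemma plsm_idn_zer: "f \<in> ar C \<Longrightarrow> plsm C f (idn C (zer C)) = f" "f \<in> ar C \<Longrightarrow> plsm C (idn C (zer C)) f = f"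
  using parsum by (simp_all add: is_parsum_def)

lemma pls_assoc: "X \<in> ob C \<Longrightarrow> Y \<in> ob C \<Longrightarrow> Z \<in> ob C \<Longrightarrow> dsj C X Y \<Longrightarrow> dsj C X Z \<Longrightarrow> dsj C Y Z \<Longrightarrow>
    pls C (pls C X Y) Z = pls C X (pls C Y Z)"
  using parsum by (simp add: is_parsum_def)

lemma plsm_assoc: "f \<in> hom C X Y \<Longrightarrow> g \<in> hom C X' Y' \<Longrightarrow> h \<in> hom C X'' Y'' \<Longrightarrow>
    dsj C X X' \<Longrightarrow> dsj C Y Y' \<Longrightarrow> dsj C X X'' \<Longrightarrow> dsj C Y Y'' \<Longrightarrow> dsj C X' X'' \<Longrightarrow> dsj C Y' Y'' \<Longrightarrow>
    plsm C (plsm C f g) h = plsm C f (plsm C g h)"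
  using parsum unfolding is_parsum_def hom_def dsjm_def by blast

lemma pls_commute: "X \<in> ob C \<Longrightarrow> Y \<in> ob C \<Longrightarrow> dsj C X Y \<Longrightarrow> pls C X Y = pls C Y X"
  using parsum unfolding is_parsum_def by (elim conjE) metis

lemma plsm_commute: "f \<in> hom C X Y \<Longrightarrow> g \<in> hom C X' Y' \<Longrightarrow> dsj C X X' \<Longrightarrow> dsj C Y Y' \<Longrightarrow>
    plsm C f g = plsm C g f"
  using parsum unfolding is_parsum_def hom_def dsjm_def by blast

lemma act_pls: "inj u \<Longrightarrow> X \<in> ob C \<Longrightarrow> Y \<in> ob C \<Longrightarrow> dsj C X Y \<Longrightarrow>
    act C u (pls C X Y) = pls C (act C u X) (act C u Y)"
  using parsum unfolding is_parsum_def injs_def by blast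

lemma supp_subset: "finite A \<Longrightarrow> supported_on C X A \<Longrightarrow> supp C X \<subseteq> A"
  unfolding supp_def by blast

lemma act_eq_if_agree_on_support:
  assumes X: "X \<in> ob C" and A: "finite A" "supported_on C X A" and u: "inj u" and w: "inj w"
    and agree: "\<forall>a\<in>A. u a = w a"
  shows "act C u X = act C w X"
proof -
  have through_bij: "act C v X = act C s X" if v: "inj v" and s: "bij s" and vs: "\<forall>a\<in>A. s a = v a" for v s
  proof -
    define v' where "v' = inv s \<circ> v"
    have "inj v'"
      unfolding v'_def using v s by (simp add: inj_compose bij_imp_bij_inv bij_is_inj)
    moreover have "\<forall>a\<in>A. v' a = a"
      unfolding v'_def using vs s by (metis bij_inv_eq_iff comp_apply)
    ultimately have "act C v' X = X"
      using A(2) unfolding supported_on_def injs_def by blast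
    moreover have "s \<circ> v' = v"
      unfolding v'_def using s by (simp add: fun_eq_iff bij_is_surj surj_f_inv_f)
    ultimately show ?thesis
      using act_comp[of s v' X] s \<open>inj v'\<close> X by (simp add: bij_is_inj)
  qed
  obtain s where s: "bij s" "\<forall>a\<in>A. s a = u a"
    by (rule finite_inj_on_extends_to_bij[OF A(1) inj_on_subset[OF u subset_UNIV]])
  show ?thesis
    using through_bij[OF u s] through_bij[OF w s(1)] s(2) agree by simp
qed

lemma supported_on_act:
  assumes X: "X \<in> ob C" and A: "finite A" "supported_on C X A" and u: "inj u"
  shows "supported_on C (act C u X) (u ` A)"
  unfolding supported_on_def injs_def
proof (intro ballI impI)
  fix v assume v: "v \<in> {u. inj u}" and fixing: "\<forall>a\<in>u ` A. v a = a"
  have "act C v (act C u X) = act C (v \<circ> u) X"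
    using act_comp[of v u X] v u X by simp
  also have "\<dots> = act C u X"
    using act_eq_if_agree_on_support[OF X A, of "v \<circ> u" u] v u fixing by (simp add: inj_compose)
  finally show "act C v (act C u X) = act C u X" .
qed

text \<open>The zero object is admitted separately: \<open>supp C (zer C) = {}\<close> does not say that
  \<open>zer C\<close> is supported on the empty set.\<close>

definition supported_within :: "'o \<Rightarrow> nat set \<Rightarrow> bool" where
  "supported_within X S \<longleftrightarrow>
     X \<in> ob C \<and> (X = zer C \<or> (\<exists>A. finite A \<and> A \<subseteq> S \<and> supported_on C X A))"

lemma supported_within_ob: "supported_within X S \<Longrightarrow> X \<in> ob C"
  by (simp add: supported_within_def)

lemma supported_within_zer: "supported_within (zer C) S"
  by (simp add: supported_within_def zer_in_ob)

lemma supported_within_mono: "supported_within X S \<Longrightarrow> S \<subseteq> T \<Longrightarrow> supported_within X T"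
  unfolding supported_within_def by blast

lemma supp_subset_if_supported_within: "supported_within X S \<Longrightarrow> supp C X \<subseteq> S"
  unfolding supported_within_def using supp_zer supp_subset by (metis empty_subsetI order_trans)

lemma dsj_if_supported_within:
  "supported_within X S \<Longrightarrow> supported_within Y T \<Longrightarrow> S \<inter> T = {} \<Longrightarrow> dsj C X Y"
  unfolding dsj_def using supp_subset_if_supported_within by blast

lemma supported_within_act:
  assumes u: "inj u" and X: "X \<in> ob C"
  shows "supported_within (act C u X) (range u)"
proof -
  obtain A where A: "finite A" "supported_on C X A"
    using tame_ob[OF X] by blast
  then show ?thesis
    unfolding supported_within_def using supported_on_act[OF X A u] act_in_ob[OF u X] by blast
qed

lemma supported_within_pls:
  assumes X: "supported_within X S" and Y: "supported_within Y T" and ST: "S \<inter> T = {}"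
  shows "supported_within (pls C X Y) (S \<union> T)"
proof -
  have d: "dsj C X Y"
    using dsj_if_supported_within X Y ST by blast
  have ob: "X \<in> ob C" "Y \<in> ob C"
    using X Y supported_within_ob by auto
  show ?thesis
  proof (cases "X = zer C \<or> Y = zer C")
    case True
    then show ?thesis
      using X Y ob pls_zer supported_within_mono by auto
  next
    case False
    then obtain A B where A: "finite A" "A \<subseteq> S" "supported_on C X A"
      and B: "finite B" "B \<subseteq> T" "supported_on C Y B"
      using X Y unfolding supported_within_def by auto
    have "supported_on C (pls C X Y) (A \<union> B)"
      unfolding supported_on_def
    proof (intro ballI impI)
      fix u assume u: "u \<in> injs" "\<forall>a\<in>A \<union> B. u a = a"
      then have "act C u X = X" "act C u Y = Y"
        using A(3) B(3) unfolding supported_on_def by auto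
      then show "act C u (pls C X Y) = pls C X Y"
        using act_pls[of u X Y] u d ob by (simp add: injs_def)
    qed
    then show ?thesis
      unfolding supported_within_def using pls_in_ob[OF ob d] A B by blast
  qed
qed

lemma push_supported_within:
  "set Xs \<subseteq> ob C \<Longrightarrow> injm (length Xs) \<phi> \<Longrightarrow> supported_within (push C \<phi> Xs) (imm (length Xs) \<phi>)"
proof (induction Xs arbitrary: \<phi>)
  case Nil
  then show ?case by (simp add: push_Nil supported_within_zer)
next
  case (Cons X Xs)
  note inj = injm_Suc[of "length Xs" \<phi>]
  have "supported_within (act C (\<phi> 0) X) (range (\<phi> 0))"
    using supported_within_act inj Cons.prems by auto
  moreover have "supported_within (push C (\<lambda>i. \<phi> (Suc i)) Xs) (imm (length Xs) (\<lambda>i. \<phi> (Suc i)))"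
    using Cons inj by auto
  ultimately show ?case
    using supported_within_pls inj Cons.prems by (simp add: push_Cons imm_Suc)
qed

lemma push_in_ob: "set Xs \<subseteq> ob C \<Longrightarrow> injm (length Xs) \<phi> \<Longrightarrow> push C \<phi> Xs \<in> ob C"
  using push_supported_within supported_within_ob by blast

lemma push_dsj:
  "set Xs \<subseteq> ob C \<Longrightarrow> set Xs' \<subseteq> ob C \<Longrightarrow> injm (length Xs) \<phi> \<Longrightarrow> injm (length Xs') \<theta> \<Longrightarrow>
    imm (length Xs) \<phi> \<inter> imm (length Xs') \<theta> = {} \<Longrightarrow> dsj C (push C \<phi> Xs) (push C \<theta> Xs')"
  by (rule dsj_if_supported_within[OF push_supported_within push_supported_within])

lemma dsj_act_push:
  assumes "set (X # Xs) \<subseteq> ob C" "injm (Suc (length Xs)) \<phi>"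
  shows "dsj C (act C (\<phi> 0) X) (push C (\<lambda>i. \<phi> (Suc i)) Xs)"
proof -
  note inj = injm_Suc[OF assms(2)]
  have "supported_within (act C (\<phi> 0) X) (range (\<phi> 0))"
    using supported_within_act inj assms by auto
  moreover have "supported_within (push C (\<lambda>i. \<phi> (Suc i)) Xs) (imm (length Xs) (\<lambda>i. \<phi> (Suc i)))"
    using push_supported_within inj assms by auto
  ultimately show ?thesis
    using dsj_if_supported_within inj(3) by blast
qed

lemma pushm_in_hom:
  "set Xs \<subseteq> ob C \<Longrightarrow> injm (length Xs) \<phi> \<Longrightarrow> injm (length Xs) \<phi>' \<Longrightarrow>
    pushm C \<phi>' \<phi> Xs \<in> hom C (push C \<phi> Xs) (push C \<phi>' Xs)"
proof (induction Xs arbitrary: \<phi> \<phi>')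
  case Nil
  then show ?case by (simp add: push_Nil pushm_Nil idn_in_hom zer_in_ob)
next
  case (Cons X Xs)
  note inj = injm_Suc[of "length Xs" \<phi>] injm_Suc[of "length Xs" \<phi>']
  have "trn C (\<phi>' 0) (\<phi> 0) X \<in> hom C (act C (\<phi> 0) X) (act C (\<phi>' 0) X)"
    using trn_in_hom inj Cons.prems by auto
  moreover have "pushm C (\<lambda>i. \<phi>' (Suc i)) (\<lambda>i. \<phi> (Suc i)) Xs \<in>
      hom C (push C (\<lambda>i. \<phi> (Suc i)) Xs) (push C (\<lambda>i. \<phi>' (Suc i)) Xs)"
    using Cons inj by auto
  ultimately show ?case
    using plsm_in_hom dsj_act_push Cons.prems by (simp add: push_Cons pushm_Cons)
qed

lemma pushm_self: "set Xs \<subseteq> ob C \<Longrightarrow> injm (length Xs) \<phi> \<Longrightarrow> pushm C \<phi> \<phi> Xs = idn C (push C \<phi> Xs)"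
proof (induction Xs arbitrary: \<phi>)
  case Nil
  then show ?case by (simp add: push_Nil pushm_Nil)
next
  case (Cons X Xs)
  note inj = injm_Suc[of "length Xs" \<phi>]
  have "act C (\<phi> 0) X \<in> ob C" "push C (\<lambda>i. \<phi> (Suc i)) Xs \<in> ob C"
    using act_in_ob push_in_ob inj Cons.prems by auto
  then show ?case
    using Cons inj dsj_act_push by (simp add: push_Cons pushm_Cons trn_self plsm_idn)
qed

lemma cmp_pushm:
  "set Xs \<subseteq> ob C \<Longrightarrow> injm (length Xs) \<phi> \<Longrightarrow> injm (length Xs) \<phi>' \<Longrightarrow> injm (length Xs) \<phi>'' \<Longrightarrow>
    cmp C (pushm C \<phi>'' \<phi>' Xs) (pushm C \<phi>' \<phi> Xs) = pushm C \<phi>'' \<phi> Xs"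
proof (induction Xs arbitrary: \<phi> \<phi>' \<phi>'')
  case Nil
  then show ?case by (simp add: pushm_Nil cmp_idn_left[OF idn_in_hom[OF zer_in_ob]])
next
  case (Cons X Xs)
  note inj = injm_Suc[of "length Xs" \<phi>] injm_Suc[of "length Xs" \<phi>'] injm_Suc[of "length Xs" \<phi>'']
  have t: "trn C (\<phi>' 0) (\<phi> 0) X \<in> hom C (act C (\<phi> 0) X) (act C (\<phi>' 0) X)"
    "trn C (\<phi>'' 0) (\<phi>' 0) X \<in> hom C (act C (\<phi>' 0) X) (act C (\<phi>'' 0) X)"
    using trn_in_hom inj Cons.prems by auto
  have r: "pushm C (\<lambda>i. \<phi>' (Suc i)) (\<lambda>i. \<phi> (Suc i)) Xs \<in>
      hom C (push C (\<lambda>i. \<phi> (Suc i)) Xs) (push C (\<lambda>i. \<phi>' (Suc i)) Xs)"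
    "pushm C (\<lambda>i. \<phi>'' (Suc i)) (\<lambda>i. \<phi>' (Suc i)) Xs \<in>
      hom C (push C (\<lambda>i. \<phi>' (Suc i)) Xs) (push C (\<lambda>i. \<phi>'' (Suc i)) Xs)"
    using pushm_in_hom inj Cons.prems by auto
  have "cmp C (pushm C \<phi>'' \<phi>' (X # Xs)) (pushm C \<phi>' \<phi> (X # Xs)) =
      plsm C (cmp C (trn C (\<phi>'' 0) (\<phi>' 0) X) (trn C (\<phi>' 0) (\<phi> 0) X))
        (cmp C (pushm C (\<lambda>i. \<phi>'' (Suc i)) (\<lambda>i. \<phi>' (Suc i)) Xs)
           (pushm C (\<lambda>i. \<phi>' (Suc i)) (\<lambda>i. \<phi> (Suc i)) Xs))"
    unfolding pushm_Cons using plsm_cmp[OF t(1) t(2) r(1) r(2)] dsj_act_push Cons.prems by simp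
  also have "\<dots> = pushm C \<phi>'' \<phi> (X # Xs)"
    using Cons inj by (simp add: cmp_trn pushm_Cons)
  finally show ?case .
qed

lemma push_shift_supported_within:
  "set Ys \<subseteq> ob C \<Longrightarrow> injm (k + length Ys) \<phi> \<Longrightarrow>
    supported_within (push C (\<lambda>i. \<phi> (i + k)) Ys) (rows_image \<phi> {k..<k + length Ys})"
  using push_supported_within[of Ys "\<lambda>i. \<phi> (i + k)"] injm_shift[of "k + length Ys" \<phi> k "length Ys"]
  by (simp add: imm_shift)

lemma dsj_Cons_append:
  assumes ob: "set (X # Xs @ Ys) \<subseteq> ob C" and inj: "injm (Suc (length Xs + length Ys)) \<phi>"
  defines "n \<equiv> length Xs"
  shows "dsj C (act C (\<phi> 0) X) (push C (\<lambda>i. \<phi> (Suc i)) Xs)"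
    "dsj C (act C (\<phi> 0) X) (push C (\<lambda>i. \<phi> (i + Suc n)) Ys)"
    "dsj C (push C (\<lambda>i. \<phi> (Suc i)) Xs) (push C (\<lambda>i. \<phi> (i + Suc n)) Ys)"
proof -
  have A: "supported_within (act C (\<phi> 0) X) (rows_image \<phi> {0})"
    using supported_within_act[of "\<phi> 0" X] injm_inj[OF inj] ob by (simp add: rows_image_def)
  have B: "supported_within (push C (\<lambda>i. \<phi> (Suc i)) Xs) (rows_image \<phi> {1..<1 + n})"
    using push_shift_supported_within[of Xs 1 \<phi>] ob injm_mono[OF inj, of "1 + n"] by (simp add: n_def)
  have Z: "supported_within (push C (\<lambda>i. \<phi> (i + Suc n)) Ys) (rows_image \<phi> {Suc n..<Suc n + length Ys})"
    using push_shift_supported_within[of Ys "Suc n" \<phi>] ob inj by (simp add: n_def)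
  have "rows_image \<phi> {0} \<inter> rows_image \<phi> {1..<1 + n} = {}"
    "rows_image \<phi> {0} \<inter> rows_image \<phi> {Suc n..<Suc n + length Ys} = {}"
    "rows_image \<phi> {1..<1 + n} \<inter> rows_image \<phi> {Suc n..<Suc n + length Ys} = {}"
    by (rule injm_rows_image_disjoint[OF inj]; auto simp: n_def)+
  then show "dsj C (act C (\<phi> 0) X) (push C (\<lambda>i. \<phi> (Suc i)) Xs)"
    "dsj C (act C (\<phi> 0) X) (push C (\<lambda>i. \<phi> (i + Suc n)) Ys)"
    "dsj C (push C (\<lambda>i. \<phi> (Suc i)) Xs) (push C (\<lambda>i. \<phi> (i + Suc n)) Ys)"
    using dsj_if_supported_within A B Z by blast+
qed

lemma push_append:
  "set Xs \<subseteq> ob C \<Longrightarrow> set Ys \<subseteq> ob C \<Longrightarrow> injm (length Xs + length Ys) \<phi> \<Longrightarrow>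
    push C \<phi> (Xs @ Ys) = pls C (push C \<phi> Xs) (push C (\<lambda>i. \<phi> (i + length Xs)) Ys)"
proof (induction Xs arbitrary: \<phi>)
  case Nil
  then show ?case using push_in_ob[of Ys \<phi>] by (simp add: push_Nil pls_zer)
next
  case (Cons X Xs)
  have inj: "injm (length Xs + length Ys) (\<lambda>i. \<phi> (Suc i))"
    using injm_Suc Cons.prems by simp
  have ob: "act C (\<phi> 0) X \<in> ob C" "push C (\<lambda>i. \<phi> (Suc i)) Xs \<in> ob C"
    "push C (\<lambda>i. \<phi> (i + Suc (length Xs))) Ys \<in> ob C"
    using act_in_ob[OF injm_inj] push_in_ob[OF _ injm_mono[OF inj]] Cons.prems
      push_in_ob[OF _ injm_shift[of _ \<phi> "Suc (length Xs)" "length Ys"]] by auto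
  show ?case
    using Cons.IH[OF _ _ inj] Cons.prems pls_assoc[OF ob dsj_Cons_append[of X Xs Ys \<phi>]]
    by (simp add: push_Cons)
qed

lemma pushm_append:
  "set Xs \<subseteq> ob C \<Longrightarrow> set Ys \<subseteq> ob C \<Longrightarrow> injm (length Xs + length Ys) \<phi> \<Longrightarrow>
    injm (length Xs + length Ys) \<phi>' \<Longrightarrow>
    pushm C \<phi>' \<phi> (Xs @ Ys) =
      plsm C (pushm C \<phi>' \<phi> Xs) (pushm C (\<lambda>i. \<phi>' (i + length Xs)) (\<lambda>i. \<phi> (i + length Xs)) Ys)"
proof (induction Xs arbitrary: \<phi> \<phi>')
  case Nil
  then show ?case using pushm_in_hom[of Ys \<phi> \<phi>'] by (simp add: pushm_Nil plsm_idn_zer hom_def)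
next
  case (Cons X Xs)
  let ?n = "length Xs" and ?k = "length Ys"
  have inj: "injm (Suc ?n + ?k) \<phi>" "injm (Suc ?n + ?k) \<phi>'"
    using Cons.prems by simp_all
  have h1: "trn C (\<phi>' 0) (\<phi> 0) X \<in> hom C (act C (\<phi> 0) X) (act C (\<phi>' 0) X)"
    using trn_in_hom injm_inj[OF inj(1)] injm_inj[OF inj(2)] Cons.prems by auto
  have h2: "pushm C (\<lambda>i. \<phi>' (Suc i)) (\<lambda>i. \<phi> (Suc i)) Xs \<in>
      hom C (push C (\<lambda>i. \<phi> (Suc i)) Xs) (push C (\<lambda>i. \<phi>' (Suc i)) Xs)"
    using pushm_in_hom injm_shift[OF inj(1), of 1 ?n] injm_shift[OF inj(2), of 1 ?n] Cons.prems by simp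
  have h3: "pushm C (\<lambda>i. \<phi>' (i + Suc ?n)) (\<lambda>i. \<phi> (i + Suc ?n)) Ys \<in>
      hom C (push C (\<lambda>i. \<phi> (i + Suc ?n)) Ys) (push C (\<lambda>i. \<phi>' (i + Suc ?n)) Ys)"
    using pushm_in_hom injm_shift[OF inj(1), of "Suc ?n" ?k] injm_shift[OF inj(2), of "Suc ?n" ?k] Cons.prems
    by simp
  note d = dsj_Cons_append[of X Xs Ys \<phi>] dsj_Cons_append[of X Xs Ys \<phi>']
  have IH: "pushm C (\<lambda>i. \<phi>' (Suc i)) (\<lambda>i. \<phi> (Suc i)) (Xs @ Ys) =
      plsm C (pushm C (\<lambda>i. \<phi>' (Suc i)) (\<lambda>i. \<phi> (Suc i)) Xs)
        (pushm C (\<lambda>i. \<phi>' (i + Suc ?n)) (\<lambda>i. \<phi> (i + Suc ?n)) Ys)"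
    using Cons injm_Suc(2) by simp
  show ?case
    using plsm_assoc[OF h1 h2 h3 d(1) d(4) d(2) d(5) d(3) d(6)] Cons.prems
    by (simp add: pushm_Cons IH)
qed

lemma push_psum:
  "set Xs \<subseteq> ob C \<Longrightarrow> set Ys \<subseteq> ob C \<Longrightarrow> injm (length Xs) \<phi> \<Longrightarrow> injm (length Ys) \<theta> \<Longrightarrow>
    imm (length Xs) \<phi> \<inter> imm (length Ys) \<theta> = {} \<Longrightarrow>
    push C (psum (length Xs) \<phi> \<theta>) (Xs @ Ys) = pls C (push C \<phi> Xs) (push C \<theta> Ys)"
  using push_append[of Xs Ys "psum (length Xs) \<phi> \<theta>"] injm_psum[of "length Xs" \<phi> "length Ys" \<theta>]
    push_cong[of Xs "psum (length Xs) \<phi> \<theta>" \<phi> C]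
  by (simp add: psum_less psum_shift)

lemma pushm_psum:
  "set Xs \<subseteq> ob C \<Longrightarrow> set Ys \<subseteq> ob C \<Longrightarrow> injm (length Xs) \<phi> \<Longrightarrow> injm (length Ys) \<theta> \<Longrightarrow>
    imm (length Xs) \<phi> \<inter> imm (length Ys) \<theta> = {} \<Longrightarrow>
    injm (length Xs) \<phi>' \<Longrightarrow> injm (length Ys) \<theta>' \<Longrightarrow> imm (length Xs) \<phi>' \<inter> imm (length Ys) \<theta>' = {} \<Longrightarrow>
    pushm C (psum (length Xs) \<phi>' \<theta>') (psum (length Xs) \<phi> \<theta>) (Xs @ Ys) =
      plsm C (pushm C \<phi>' \<phi> Xs) (pushm C \<theta>' \<theta> Ys)"
  using pushm_append[of Xs Ys "psum (length Xs) \<phi> \<theta>" "psum (length Xs) \<phi>' \<theta>'"]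
    injm_psum[of "length Xs" \<phi> "length Ys" \<theta>] injm_psum[of "length Xs" \<phi>' "length Ys" \<theta>']
    pushm_cong[of Xs "psum (length Xs) \<phi> \<theta>" \<phi> "psum (length Xs) \<phi>' \<theta>'" \<phi>' C]
  by (simp add: psum_less psum_shift)

lemma push_phibar:
  assumes ob: "set Xs \<subseteq> ob C" "set Ys \<subseteq> ob C" and inj: "injm (length Xs + length Ys) \<phi>"
  shows "push C (phibar (length Xs) (length Ys) \<phi>) (Ys @ Xs) = push C \<phi> (Xs @ Ys)"
proof -
  let ?\<phi>\<^sub>2 = "\<lambda>i. \<phi> (i + length Xs)"
  note split = injm_split[OF inj]
  have "push C (phibar (length Xs) (length Ys) \<phi>) (Ys @ Xs) = pls C (push C ?\<phi>\<^sub>2 Ys) (push C \<phi> Xs)"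
    unfolding phibar_eq_psum using push_psum ob split by (simp add: Int_commute)
  also have "\<dots> = pls C (push C \<phi> Xs) (push C ?\<phi>\<^sub>2 Ys)"
    using pls_commute push_in_ob push_dsj ob split by (simp add: Int_commute)
  also have "\<dots> = push C \<phi> (Xs @ Ys)"
    using push_append[OF ob inj] by simp
  finally show ?thesis .
qed

lemma pushm_phibar:
  assumes ob: "set Xs \<subseteq> ob C" "set Ys \<subseteq> ob C"
    and inj: "injm (length Xs + length Ys) \<phi>" "injm (length Xs + length Ys) \<phi>'"
  shows "pushm C (phibar (length Xs) (length Ys) \<phi>') (phibar (length Xs) (length Ys) \<phi>) (Ys @ Xs) =
    pushm C \<phi>' \<phi> (Xs @ Ys)"
proof -
  let ?\<phi>\<^sub>2 = "\<lambda>i. \<phi> (i + length Xs)" and ?\<phi>'\<^sub>2 = "\<lambda>i. \<phi>' (i + length Xs)"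
  note split = injm_split[OF inj(1)] injm_split[OF inj(2)]
  have "pushm C (phibar (length Xs) (length Ys) \<phi>') (phibar (length Xs) (length Ys) \<phi>) (Ys @ Xs) =
      plsm C (pushm C ?\<phi>'\<^sub>2 ?\<phi>\<^sub>2 Ys) (pushm C \<phi>' \<phi> Xs)"
    unfolding phibar_eq_psum using pushm_psum ob split by (simp add: Int_commute)
  also have "\<dots> = plsm C (pushm C \<phi>' \<phi> Xs) (pushm C ?\<phi>'\<^sub>2 ?\<phi>\<^sub>2 Ys)"
    by (rule plsm_commute[OF pushm_in_hom pushm_in_hom push_dsj push_dsj])
      (use ob split in \<open>simp_all add: Int_commute\<close>)
  also have "\<dots> = pushm C \<phi>' \<phi> (Xs @ Ys)"
    using pushm_append[OF ob inj] by simp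
  finally show ?thesis .
qed

lemma cmp_in_ar: "f \<in> ar C \<Longrightarrow> g \<in> ar C \<Longrightarrow> dm C g = cd C f \<Longrightarrow> cmp C g f \<in> ar C"
  and dm_cmp: "f \<in> ar C \<Longrightarrow> g \<in> ar C \<Longrightarrow> dm C g = cd C f \<Longrightarrow> dm C (cmp C g f) = dm C f"
  and cd_cmp: "f \<in> ar C \<Longrightarrow> g \<in> ar C \<Longrightarrow> dm C g = cd C f \<Longrightarrow> cd C (cmp C g f) = cd C g"
  using cmp_in_hom[of f "dm C f" "cd C f" g "cd C g"] by (simp_all add: hom_def)

lemma cmp_assoc_right: "f \<in> ar C \<Longrightarrow> g \<in> ar C \<Longrightarrow> h \<in> ar C \<Longrightarrow> dm C g = cd C f \<Longrightarrow> dm C h = cd C g \<Longrightarrow>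
    cmp C (cmp C h g) f = cmp C h (cmp C g f)"
  using cmp_assoc[of f "dm C f" "cd C f" g "cd C g" h "cd C h"] by (simp add: hom_def)

lemma cmp_idn_left_ar: "f \<in> ar C \<Longrightarrow> cd C f = Y \<Longrightarrow> cmp C (idn C Y) f = f"
  and cmp_idn_right_ar: "f \<in> ar C \<Longrightarrow> dm C f = X \<Longrightarrow> cmp C f (idn C X) = f"
  using cmp_idn_left[of f "dm C f" Y] cmp_idn_right[of f X "cd C f"] by (simp_all add: hom_def)

lemma idn_in_ar: "X \<in> ob C \<Longrightarrow> idn C X \<in> ar C"
  and dm_idn: "X \<in> ob C \<Longrightarrow> dm C (idn C X) = X"
  and cd_idn: "X \<in> ob C \<Longrightarrow> cd C (idn C X) = X"
  using idn_in_hom[of X] by (simp_all add: hom_def)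

lemma pushm_in_ar: "set Xs \<subseteq> ob C \<Longrightarrow> injm (length Xs) \<phi> \<Longrightarrow> injm (length Xs) \<phi>' \<Longrightarrow> pushm C \<phi>' \<phi> Xs \<in> ar C"
  and dm_pushm: "set Xs \<subseteq> ob C \<Longrightarrow> injm (length Xs) \<phi> \<Longrightarrow> injm (length Xs) \<phi>' \<Longrightarrow>
    dm C (pushm C \<phi>' \<phi> Xs) = push C \<phi> Xs"
  and cd_pushm: "set Xs \<subseteq> ob C \<Longrightarrow> injm (length Xs) \<phi> \<Longrightarrow> injm (length Xs) \<phi>' \<Longrightarrow>
    cd C (pushm C \<phi>' \<phi> Xs) = push C \<phi>' Xs"
  using pushm_in_hom[of Xs \<phi> \<phi>'] by (simp_all add: hom_def)

lemma cmp_pushm_assoc: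
  "set Xs \<subseteq> ob C \<Longrightarrow> injm (length Xs) \<phi> \<Longrightarrow> injm (length Xs) \<phi>' \<Longrightarrow> injm (length Xs) \<phi>'' \<Longrightarrow>
    h \<in> ar C \<Longrightarrow> cd C h = push C \<phi> Xs \<Longrightarrow>
    cmp C (pushm C \<phi>'' \<phi>' Xs) (cmp C (pushm C \<phi>' \<phi> Xs) h) = cmp C (pushm C \<phi>'' \<phi> Xs) h"
  using cmp_pushm[of Xs \<phi> \<phi>' \<phi>''] pushm_in_ar[of Xs \<phi> \<phi>'] pushm_in_ar[of Xs \<phi>' \<phi>'']
  by (simp add: dm_pushm cd_pushm cmp_assoc_right[symmetric])

lemmas arrow_simps = cmp_in_ar dm_cmp cd_cmp cmp_assoc_right cmp_idn_left_ar cmp_idn_right_ar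
  idn_in_ar dm_idn cd_idn pushm_in_ar dm_pushm cd_pushm cmp_pushm_assoc cmp_pushm pushm_self push_in_ob

section \<open>The category \<open>\<Sigma>(C)\<close>\<close>

lemma valid_iff: "valid C Xs Ys (\<psi>, f, \<phi>) \<longleftrightarrow>
    injm (length Xs) \<phi> \<and> injm (length Ys) \<psi> \<and> f \<in> hom C (push C \<phi> Xs) (push C \<psi> Ys)"
  by (simp add: valid_def)

lemma srel_iff: "srel C Xs Ys (\<psi>, f, \<phi>) (\<psi>', f', \<phi>') \<longleftrightarrow>
    f' = cmp C (pushm C \<psi>' \<psi> Ys) (cmp C f (pushm C \<phi> \<phi>' Xs))"
  by (simp add: srel_def)

lemma srel_refl: "set Xs \<subseteq> ob C \<Longrightarrow> set Ys \<subseteq> ob C \<Longrightarrow> valid C Xs Ys t \<Longrightarrow> srel C Xs Ys t t"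
  by (cases t) (auto simp: valid_iff srel_iff hom_def arrow_simps)

lemma srel_sym:
  "set Xs \<subseteq> ob C \<Longrightarrow> set Ys \<subseteq> ob C \<Longrightarrow> valid C Xs Ys t \<Longrightarrow> valid C Xs Ys t' \<Longrightarrow>
    srel C Xs Ys t t' \<Longrightarrow> srel C Xs Ys t' t"
  by (cases t rule: prod_cases3, cases t' rule: prod_cases3)
    (auto simp: valid_iff srel_iff hom_def arrow_simps)

lemma srel_trans:
  "set Xs \<subseteq> ob C \<Longrightarrow> set Ys \<subseteq> ob C \<Longrightarrow>
    valid C Xs Ys t \<Longrightarrow> valid C Xs Ys t' \<Longrightarrow> valid C Xs Ys t'' \<Longrightarrow>
    srel C Xs Ys t t' \<Longrightarrow> srel C Xs Ys t' t'' \<Longrightarrow> srel C Xs Ys t t''"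
  by (cases t rule: prod_cases3, cases t' rule: prod_cases3, cases t'' rule: prod_cases3)
    (auto simp: valid_iff srel_iff hom_def arrow_simps)

lemma mem_cls_iff: "t' \<in> cls C Xs Ys t \<longleftrightarrow> valid C Xs Ys t' \<and> srel C Xs Ys t t'"
  by (simp add: cls_def)

lemma mem_cls_self: "set Xs \<subseteq> ob C \<Longrightarrow> set Ys \<subseteq> ob C \<Longrightarrow> valid C Xs Ys t \<Longrightarrow> t \<in> cls C Xs Ys t"
  using srel_refl by (simp add: mem_cls_iff)

lemma cls_eqI:
  assumes "set Xs \<subseteq> ob C" "set Ys \<subseteq> ob C" "valid C Xs Ys t" "valid C Xs Ys t'" "srel C Xs Ys t t'"
  shows "cls C Xs Ys t = cls C Xs Ys t'"
proof -
  have "srel C Xs Ys t' t"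
    using srel_sym[OF assms] .
  then show ?thesis
    using assms srel_trans[OF assms(1,2)] unfolding cls_def by blast
qed

lemma cls_eq_if_mem:
  "set Xs \<subseteq> ob C \<Longrightarrow> set Ys \<subseteq> ob C \<Longrightarrow> valid C Xs Ys t \<Longrightarrow> t' \<in> cls C Xs Ys t \<Longrightarrow>
    cls C Xs Ys t' = cls C Xs Ys t"
  using cls_eqI[of Xs Ys t t'] by (simp add: mem_cls_iff)

lemma srel_if_mem_cls:
  assumes "set Xs \<subseteq> ob C" "set Ys \<subseteq> ob C" "valid C Xs Ys t\<^sub>0"
    and "t \<in> cls C Xs Ys t\<^sub>0" "t' \<in> cls C Xs Ys t\<^sub>0"
  shows "srel C Xs Ys t t'"
proof -
  have "valid C Xs Ys t" "valid C Xs Ys t'" "srel C Xs Ys t\<^sub>0 t" "srel C Xs Ys t\<^sub>0 t'"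
    using assms(4,5) by (simp_all add: mem_cls_iff)
  then show ?thesis
    using srel_sym[OF assms(1-3)] srel_trans[OF assms(1,2) _ assms(3)] by blast
qed

definition reindex :: "'o list \<Rightarrow> 'o list \<Rightarrow> 'm triple \<Rightarrow> (nat \<Rightarrow> nat \<Rightarrow> nat) \<Rightarrow> (nat \<Rightarrow> nat \<Rightarrow> nat) \<Rightarrow>
    'm triple" where
  "reindex Xs Ys t \<psi>' \<phi>' = (case t of (\<psi>, f, \<phi>) \<Rightarrow>
     (\<psi>', cmp C (pushm C \<psi>' \<psi> Ys) (cmp C f (pushm C \<phi> \<phi>' Xs)), \<phi>'))"

lemma reindex_injections: "fst (reindex Xs Ys t \<psi>' \<phi>') = \<psi>'" "snd (snd (reindex Xs Ys t \<psi>' \<phi>')) = \<phi>'"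
  by (cases t rule: prod_cases3; simp add: reindex_def)+

lemma valid_reindex:
  "set Xs \<subseteq> ob C \<Longrightarrow> set Ys \<subseteq> ob C \<Longrightarrow> valid C Xs Ys t \<Longrightarrow>
    injm (length Xs) \<phi>' \<Longrightarrow> injm (length Ys) \<psi>' \<Longrightarrow> valid C Xs Ys (reindex Xs Ys t \<psi>' \<phi>')"
  by (cases t rule: prod_cases3) (auto simp: reindex_def valid_iff hom_def arrow_simps)

lemma reindex_mem_cls:
  assumes "set Xs \<subseteq> ob C" "set Ys \<subseteq> ob C" "valid C Xs Ys t"
    and "injm (length Xs) \<phi>'" "injm (length Ys) \<psi>'"
  shows "reindex Xs Ys t \<psi>' \<phi>' \<in> cls C Xs Ys t"
proof -
  have "srel C Xs Ys t (reindex Xs Ys t \<psi>' \<phi>')"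
    by (cases t rule: prod_cases3) (simp add: reindex_def srel_iff)
  then show ?thesis
    using valid_reindex[OF assms] by (simp add: mem_cls_iff)
qed

lemma cls_reindex:
  "set Xs \<subseteq> ob C \<Longrightarrow> set Ys \<subseteq> ob C \<Longrightarrow> valid C Xs Ys t \<Longrightarrow>
    injm (length Xs) \<phi>' \<Longrightarrow> injm (length Ys) \<psi>' \<Longrightarrow> cls C Xs Ys (reindex Xs Ys t \<psi>' \<phi>') = cls C Xs Ys t"
  using cls_eq_if_mem reindex_mem_cls by blast

lemma cls_cong:
  assumes ob: "set Xs \<subseteq> ob C" "set Ys \<subseteq> ob C" and v: "valid C Xs Ys (\<psi>, f, \<phi>)"
    and "\<And>i. i < length Ys \<Longrightarrow> \<psi> i = \<psi>' i" "\<And>i. i < length Xs \<Longrightarrow> \<phi> i = \<phi>' i"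
  shows "cls C Xs Ys (\<psi>', f, \<phi>') = cls C Xs Ys (\<psi>, f, \<phi>)"
proof -
  have inj: "injm (length Xs) \<phi>'" "injm (length Ys) \<psi>'"
    using injm_cong[of "length Xs" \<phi> \<phi>'] injm_cong[of "length Ys" \<psi> \<psi>'] assms(4,5) v
    by (simp_all add: valid_iff)
  have "pushm C \<psi>' \<psi> Ys = pushm C \<psi> \<psi> Ys" "pushm C \<phi> \<phi>' Xs = pushm C \<phi> \<phi> Xs"
    by (rule pushm_cong; simp add: assms(4,5))+
  then have "reindex Xs Ys (\<psi>, f, \<phi>) \<psi>' \<phi>' = (\<psi>', f, \<phi>')"
    using ob v by (simp add: reindex_def valid_iff hom_def arrow_simps)
  then show ?thesis
    using cls_reindex[OF ob v inj] by simp
qed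

abbreviation SC where "SC \<equiv> sigma_cat C"

definition arr :: "'o list \<Rightarrow> 'o list \<Rightarrow> 'm triple \<Rightarrow> ('o, 'm) sarr" where
  "arr Xs Ys t = (Xs, Ys, cls C Xs Ys t)"

lemma sigma_cat_simps:
  "ob SC = lists (ob C)" "dm SC a = fst a" "cd SC a = fst (snd a)"
  "idn SC Xs = arr Xs Xs (phi0, idn C (push C phi0 Xs), phi0)"
  by (simp_all add: sigma_cat_def arr_def)

lemma ob_sigma_cat_iff: "Xs \<in> ob SC \<longleftrightarrow> set Xs \<subseteq> ob C"
  by (simp add: sigma_cat_simps lists_eq_set)

lemma ar_sigma_cat_iff:
  "a \<in> ar SC \<longleftrightarrow> (\<exists>Xs Ys t. a = arr Xs Ys t \<and> set Xs \<subseteq> ob C \<and> set Ys \<subseteq> ob C \<and> valid C Xs Ys t)"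
  unfolding sigma_cat_def arr_def by (simp add: lists_eq_set; blast)

lemma ar_sigma_cat_cases:
  assumes "a \<in> ar SC"
  obtains Xs Ys \<psi> f \<phi> where "a = arr Xs Ys (\<psi>, f, \<phi>)" "set Xs \<subseteq> ob C" "set Ys \<subseteq> ob C"
    "valid C Xs Ys (\<psi>, f, \<phi>)"
  using assms unfolding ar_sigma_cat_iff by (metis prod_cases3)

lemma arr_parts: "fst (arr Xs Ys t) = Xs" "fst (snd (arr Xs Ys t)) = Ys" "snd (snd (arr Xs Ys t)) = cls C Xs Ys t"
  by (simp_all add: arr_def)

lemma dm_arr: "dm SC (arr Xs Ys t) = Xs" and cd_arr: "cd SC (arr Xs Ys t) = Ys"
  by (simp_all add: sigma_cat_simps arr_parts)

lemma arr_in_hom: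
  assumes "set Xs \<subseteq> ob C" "set Ys \<subseteq> ob C" "valid C Xs Ys t"
  shows "arr Xs Ys t \<in> hom SC Xs Ys"
proof -
  have "arr Xs Ys t \<in> ar SC"
    using assms unfolding ar_sigma_cat_iff by blast
  then show ?thesis
    by (simp add: hom_def dm_arr cd_arr)
qed

lemma arr_eqI:
  "set Xs \<subseteq> ob C \<Longrightarrow> set Ys \<subseteq> ob C \<Longrightarrow> valid C Xs Ys t \<Longrightarrow> valid C Xs Ys t' \<Longrightarrow>
    srel C Xs Ys t t' \<Longrightarrow> arr Xs Ys t = arr Xs Ys t'"
  using cls_eqI by (simp add: arr_def)

lemma arr_cong:
  assumes "set Xs \<subseteq> ob C" "set Ys \<subseteq> ob C" "valid C Xs Ys (\<psi>, f, \<phi>)"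
    and "\<And>i. i < length Ys \<Longrightarrow> \<psi> i = \<psi>' i" "\<And>i. i < length Xs \<Longrightarrow> \<phi> i = \<phi>' i"
  shows "arr Xs Ys (\<psi>', f, \<phi>') = arr Xs Ys (\<psi>, f, \<phi>)"
  using cls_cong[OF assms] by (simp add: arr_def)

lemma valid_cong:
  assumes "valid C Xs Ys (\<psi>, f, \<phi>)"
    and "\<And>i. i < length Ys \<Longrightarrow> \<psi> i = \<psi>' i" "\<And>i. i < length Xs \<Longrightarrow> \<phi> i = \<phi>' i"
  shows "valid C Xs Ys (\<psi>', f, \<phi>')"
  using assms injm_cong[of "length Xs" \<phi> \<phi>'] injm_cong[of "length Ys" \<psi> \<psi>']
    push_cong[of Xs \<phi> \<phi>' C] push_cong[of Ys \<psi> \<psi>' C]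
  by (simp add: valid_iff)

lemma rep_arr: "set Xs \<subseteq> ob C \<Longrightarrow> set Ys \<subseteq> ob C \<Longrightarrow> valid C Xs Ys t \<Longrightarrow> rep (arr Xs Ys t) \<in> cls C Xs Ys t"
  unfolding rep_def arr_def by (metis mem_cls_self someI snd_conv)

lemma ar_sigma_cat_obtain:
  assumes "a \<in> ar SC" "\<And>n. injm n \<phi>'" "\<And>n. injm n \<psi>'"
  obtains Xs Ys f where "a = arr Xs Ys (\<psi>', f, \<phi>')" "set Xs \<subseteq> ob C" "set Ys \<subseteq> ob C"
    "valid C Xs Ys (\<psi>', f, \<phi>')"
proof -
  obtain Xs Ys t where a: "a = arr Xs Ys t" "set Xs \<subseteq> ob C" "set Ys \<subseteq> ob C" "valid C Xs Ys t"
    using assms(1) unfolding ar_sigma_cat_iff by blast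
  obtain f where f: "reindex Xs Ys t \<psi>' \<phi>' = (\<psi>', f, \<phi>')"
    using reindex_injections[of Xs Ys t \<psi>' \<phi>'] by (metis prod.collapse)
  have "valid C Xs Ys (\<psi>', f, \<phi>')" "cls C Xs Ys (\<psi>', f, \<phi>') = cls C Xs Ys t"
    using valid_reindex[OF a(2-4)] cls_reindex[OF a(2-4)] assms(2,3) f by metis+
  with a show ?thesis
    using that[of Xs Ys f] by (simp add: arr_def)
qed

lemma idn_sigma_cat_eq:
  assumes "set Xs \<subseteq> ob C" "injm (length Xs) \<phi>"
  shows "idn SC Xs = arr Xs Xs (\<phi>, idn C (push C \<phi> Xs), \<phi>)"
proof -
  have "valid C Xs Xs (phi0, idn C (push C phi0 Xs), phi0)"
    using assms injm_phi0 by (simp add: valid_iff idn_in_hom push_in_ob)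
  moreover have "reindex Xs Xs (phi0, idn C (push C phi0 Xs), phi0) \<phi> \<phi> = (\<phi>, idn C (push C \<phi> Xs), \<phi>)"
    unfolding reindex_def using assms injm_phi0 by (simp add: arrow_simps)
  ultimately show ?thesis
    using cls_reindex assms by (metis arr_def sigma_cat_simps(4))
qed

definition comp_triple :: "'o list \<Rightarrow> 'm triple \<Rightarrow> 'm triple \<Rightarrow> 'm triple" where
  "comp_triple Ys s t = (case s of (\<rho>, g, \<theta>) \<Rightarrow> case t of (\<psi>, f, \<phi>) \<Rightarrow>
     (\<rho>, cmp C g (cmp C (pushm C \<theta> \<psi> Ys) f), \<phi>))"

lemma valid_comp_triple:
  "set Xs \<subseteq> ob C \<Longrightarrow> set Ys \<subseteq> ob C \<Longrightarrow> set Zs \<subseteq> ob C \<Longrightarrow>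
    valid C Xs Ys t \<Longrightarrow> valid C Ys Zs s \<Longrightarrow> valid C Xs Zs (comp_triple Ys s t)"
  by (cases s; cases t) (auto simp: comp_triple_def valid_iff hom_def arrow_simps)

lemma srel_comp_triple:
  assumes ob: "set Xs \<subseteq> ob C" "set Ys \<subseteq> ob C" "set Zs \<subseteq> ob C"
    and v: "valid C Xs Ys t" "valid C Ys Zs s" "valid C Xs Ys t'" "valid C Ys Zs s'"
    and r: "srel C Xs Ys t t'" "srel C Ys Zs s s'"
  shows "srel C Xs Zs (comp_triple Ys s t) (comp_triple Ys s' t')"
  using assms
  by (cases s; cases t; cases s'; cases t') (auto simp: comp_triple_def valid_iff srel_iff hom_def arrow_simps)

lemma cmp_arr:
  assumes ob: "set Xs \<subseteq> ob C" "set Ys \<subseteq> ob C" "set Zs \<subseteq> ob C"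
    and v: "valid C Xs Ys t" "valid C Ys Zs s"
  shows "cmp SC (arr Ys Zs s) (arr Xs Ys t) = arr Xs Zs (comp_triple Ys s t)"
proof -
  have t': "rep (arr Xs Ys t) \<in> cls C Xs Ys t" and s': "rep (arr Ys Zs s) \<in> cls C Ys Zs s"
    using rep_arr ob v by blast+
  have "cmp SC (arr Ys Zs s) (arr Xs Ys t) = arr Xs Zs (comp_triple Ys (rep (arr Ys Zs s)) (rep (arr Xs Ys t)))"
    by (simp add: sigma_cat_def comp_triple_def arr_def split: prod.split)
  also have "\<dots> = arr Xs Zs (comp_triple Ys s t)"
    using t' s' ob v
    by (intro arr_eqI[symmetric] valid_comp_triple srel_comp_triple) (auto simp: mem_cls_iff)
  finally show ?thesis .
qed

lemma cmp_arr_matching: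
  assumes ob: "set Xs \<subseteq> ob C" "set Ys \<subseteq> ob C" "set Zs \<subseteq> ob C"
    and v: "valid C Xs Ys (\<psi>, f, \<phi>)" "valid C Ys Zs (\<rho>, g, \<psi>)"
  shows "cmp SC (arr Ys Zs (\<rho>, g, \<psi>)) (arr Xs Ys (\<psi>, f, \<phi>)) = arr Xs Zs (\<rho>, cmp C g f, \<phi>)"
  using cmp_arr[OF ob v] ob v by (simp add: comp_triple_def valid_iff hom_def arrow_simps)

lemma comp_triple_assoc:
  "set Xs \<subseteq> ob C \<Longrightarrow> set Ys \<subseteq> ob C \<Longrightarrow> set Zs \<subseteq> ob C \<Longrightarrow>
    valid C Xs Ys t \<Longrightarrow> valid C Ys Zs s \<Longrightarrow> valid C Zs Ws u \<Longrightarrow>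
    comp_triple Zs u (comp_triple Ys s t) = comp_triple Ys (comp_triple Zs u s) t"
  by (cases t; cases s; cases u) (auto simp: comp_triple_def valid_iff hom_def arrow_simps)

lemma cmp_arr_idn:
  assumes "set Xs \<subseteq> ob C" "set Ys \<subseteq> ob C" "valid C Xs Ys (\<psi>, f, \<phi>)"
  shows "cmp SC (arr Xs Ys (\<psi>, f, \<phi>)) (idn SC Xs) = arr Xs Ys (\<psi>, f, \<phi>)"
    and "cmp SC (idn SC Ys) (arr Xs Ys (\<psi>, f, \<phi>)) = arr Xs Ys (\<psi>, f, \<phi>)"
proof -
  have inj: "injm (length Xs) \<phi>" "injm (length Ys) \<psi>" and f: "f \<in> hom C (push C \<phi> Xs) (push C \<psi> Ys)"
    using assms(3) by (simp_all add: valid_iff)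
  have "valid C Xs Xs (\<phi>, idn C (push C \<phi> Xs), \<phi>)" "valid C Ys Ys (\<psi>, idn C (push C \<psi> Ys), \<psi>)"
    using assms inj by (simp_all add: valid_iff idn_in_hom push_in_ob)
  then show "cmp SC (arr Xs Ys (\<psi>, f, \<phi>)) (idn SC Xs) = arr Xs Ys (\<psi>, f, \<phi>)"
    and "cmp SC (idn SC Ys) (arr Xs Ys (\<psi>, f, \<phi>)) = arr Xs Ys (\<psi>, f, \<phi>)"
    using assms inj f idn_sigma_cat_eq cmp_arr_matching by (simp_all add: cmp_idn_left cmp_idn_right)
qed

theorem is_cat_sigma_cat: "is_cat SC"
  unfolding is_cat_def
proof (intro conjI ballI impI)
  fix a assume "a \<in> ar SC"
  then show "dm SC a \<in> ob SC" "cd SC a \<in> ob SC"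
    by (auto simp: ar_sigma_cat_iff ob_sigma_cat_iff dm_arr cd_arr)
next
  fix Xs assume "Xs \<in> ob SC"
  then show "idn SC Xs \<in> hom SC Xs Xs"
    unfolding sigma_cat_simps(4) using injm_phi0
    by (intro arr_in_hom) (simp_all add: ob_sigma_cat_iff valid_iff idn_in_hom push_in_ob)
next
  fix a b assume "a \<in> ar SC" "b \<in> ar SC" and ab: "dm SC b = cd SC a"
  then obtain Xs Ys Zs t s where "a = arr Xs Ys t" "b = arr Ys Zs s"
    and "set Xs \<subseteq> ob C" "set Ys \<subseteq> ob C" "set Zs \<subseteq> ob C" "valid C Xs Ys t" "valid C Ys Zs s"
    unfolding ar_sigma_cat_iff by (auto simp: dm_arr cd_arr)
  then show "cmp SC b a \<in> hom SC (dm SC a) (cd SC b)"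
    by (simp add: cmp_arr dm_arr cd_arr arr_in_hom valid_comp_triple)
next
  fix a assume "a \<in> ar SC"
  then show "cmp SC a (idn SC (dm SC a)) = a" "cmp SC (idn SC (cd SC a)) a = a"
    by (auto elim!: ar_sigma_cat_cases simp: dm_arr cd_arr cmp_arr_idn)
next
  fix a b c assume "a \<in> ar SC" "b \<in> ar SC" "c \<in> ar SC" "dm SC b = cd SC a" "dm SC c = cd SC b"
  then obtain Xs Ys Zs Ws t s u where "a = arr Xs Ys t" "b = arr Ys Zs s" "c = arr Zs Ws u"
    and "set Xs \<subseteq> ob C" "set Ys \<subseteq> ob C" "set Zs \<subseteq> ob C" "set Ws \<subseteq> ob C"
    and "valid C Xs Ys t" "valid C Ys Zs s" "valid C Zs Ws u"
    unfolding ar_sigma_cat_iff by (auto simp: dm_arr cd_arr)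
  then show "cmp SC c (cmp SC b a) = cmp SC (cmp SC c b) a"
    by (simp add: cmp_arr valid_comp_triple comp_triple_assoc)
qed

section \<open>The permutative structure of \<open>\<Sigma>(C)\<close>\<close>

definition disjoint_reps :: "'o list \<Rightarrow> 'o list \<Rightarrow> 'o list \<Rightarrow> 'o list \<Rightarrow> 'm triple \<Rightarrow> 'm triple \<Rightarrow> bool" where
  "disjoint_reps Xs Ys Xs' Ys' t s \<longleftrightarrow>
     imm (length Xs) (snd (snd t)) \<inter> imm (length Xs') (snd (snd s)) = {} \<and>
     imm (length Ys) (fst t) \<inter> imm (length Ys') (fst s) = {}"

definition tens_triple :: "'o list \<Rightarrow> 'o list \<Rightarrow> 'm triple \<Rightarrow> 'm triple \<Rightarrow> 'm triple" where
  "tens_triple Xs Ys t s = (case t of (\<psi>, f, \<phi>) \<Rightarrow> case s of (\<rho>, g, \<theta>) \<Rightarrow>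
     (psum (length Ys) \<psi> \<rho>, plsm C f g, psum (length Xs) \<phi> \<theta>))"

lemma valid_tens_triple:
  assumes ob: "set Xs \<subseteq> ob C" "set Ys \<subseteq> ob C" "set Xs' \<subseteq> ob C" "set Ys' \<subseteq> ob C"
    and v: "valid C Xs Ys (\<psi>, f, \<phi>)" "valid C Xs' Ys' (\<rho>, g, \<theta>)"
    and d: "disjoint_reps Xs Ys Xs' Ys' (\<psi>, f, \<phi>) (\<rho>, g, \<theta>)"
  shows "valid C (Xs @ Xs') (Ys @ Ys') (tens_triple Xs Ys (\<psi>, f, \<phi>) (\<rho>, g, \<theta>))"
proof -
  have a: "injm (length Xs) \<phi>" "injm (length Ys) \<psi>" "f \<in> hom C (push C \<phi> Xs) (push C \<psi> Ys)"
    "injm (length Xs') \<theta>" "injm (length Ys') \<rho>" "g \<in> hom C (push C \<theta> Xs') (push C \<rho> Ys')"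
    using v by (simp_all add: valid_iff)
  have d': "imm (length Xs) \<phi> \<inter> imm (length Xs') \<theta> = {}" "imm (length Ys) \<psi> \<inter> imm (length Ys') \<rho> = {}"
    using d by (simp_all add: disjoint_reps_def)
  have "plsm C f g \<in> hom C (pls C (push C \<phi> Xs) (push C \<theta> Xs')) (pls C (push C \<psi> Ys) (push C \<rho> Ys'))"
    using plsm_in_hom[OF a(3) a(6) push_dsj push_dsj] ob a d' by blast
  then show ?thesis
    using injm_psum push_psum ob a d' by (simp add: tens_triple_def valid_iff)
qed

lemma srel_tens_triple:
  assumes ob: "set Xs \<subseteq> ob C" "set Ys \<subseteq> ob C" "set Xs' \<subseteq> ob C" "set Ys' \<subseteq> ob C"
    and v: "valid C Xs Ys (\<psi>, f, \<phi>)" "valid C Xs' Ys' (\<rho>, g, \<theta>)"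
      "valid C Xs Ys (\<psi>', f', \<phi>')" "valid C Xs' Ys' (\<rho>', g', \<theta>')"
    and r: "srel C Xs Ys (\<psi>, f, \<phi>) (\<psi>', f', \<phi>')" "srel C Xs' Ys' (\<rho>, g, \<theta>) (\<rho>', g', \<theta>')"
    and d: "disjoint_reps Xs Ys Xs' Ys' (\<psi>, f, \<phi>) (\<rho>, g, \<theta>)"
      "disjoint_reps Xs Ys Xs' Ys' (\<psi>', f', \<phi>') (\<rho>', g', \<theta>')"
  shows "srel C (Xs @ Xs') (Ys @ Ys')
    (tens_triple Xs Ys (\<psi>, f, \<phi>) (\<rho>, g, \<theta>)) (tens_triple Xs Ys (\<psi>', f', \<phi>') (\<rho>', g', \<theta>'))"
proof -
  have a: "injm (length Xs) \<phi>" "injm (length Ys) \<psi>" "f \<in> hom C (push C \<phi> Xs) (push C \<psi> Ys)"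
    "injm (length Xs') \<theta>" "injm (length Ys') \<rho>" "g \<in> hom C (push C \<theta> Xs') (push C \<rho> Ys')"
    "injm (length Xs) \<phi>'" "injm (length Ys) \<psi>'" "injm (length Xs') \<theta>'" "injm (length Ys') \<rho>'"
    using v by (simp_all add: valid_iff)
  have d': "imm (length Xs) \<phi> \<inter> imm (length Xs') \<theta> = {}" "imm (length Ys) \<psi> \<inter> imm (length Ys') \<rho> = {}"
    "imm (length Xs) \<phi>' \<inter> imm (length Xs') \<theta>' = {}" "imm (length Ys) \<psi>' \<inter> imm (length Ys') \<rho>' = {}"
    using d by (simp_all add: disjoint_reps_def)
  have hA: "pushm C \<psi>' \<psi> Ys \<in> hom C (push C \<psi> Ys) (push C \<psi>' Ys)"
    and hA': "pushm C \<rho>' \<rho> Ys' \<in> hom C (push C \<rho> Ys') (push C \<rho>' Ys')"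
    and hB: "pushm C \<phi> \<phi>' Xs \<in> hom C (push C \<phi>' Xs) (push C \<phi> Xs)"
    and hB': "pushm C \<theta> \<theta>' Xs' \<in> hom C (push C \<theta>' Xs') (push C \<theta> Xs')"
    using pushm_in_hom ob a by blast+
  have ds: "dsj C (push C \<phi> Xs) (push C \<theta> Xs')" "dsj C (push C \<psi> Ys) (push C \<rho> Ys')"
    "dsj C (push C \<phi>' Xs) (push C \<theta>' Xs')" "dsj C (push C \<psi>' Ys) (push C \<rho>' Ys')"
    using push_dsj ob a d' by blast+
  have "plsm C f' g' = cmp C (plsm C (pushm C \<psi>' \<psi> Ys) (pushm C \<rho>' \<rho> Ys'))
      (plsm C (cmp C f (pushm C \<phi> \<phi>' Xs)) (cmp C g (pushm C \<theta> \<theta>' Xs')))"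
    using r plsm_cmp[OF cmp_in_hom[OF hB a(3)] hA cmp_in_hom[OF hB' a(6)] hA' ds(3) ds(2) ds(4)]
    by (simp add: srel_iff)
  also have "plsm C (cmp C f (pushm C \<phi> \<phi>' Xs)) (cmp C g (pushm C \<theta> \<theta>' Xs')) =
      cmp C (plsm C f g) (plsm C (pushm C \<phi> \<phi>' Xs) (pushm C \<theta> \<theta>' Xs'))"
    by (rule plsm_cmp[OF hB a(3) hB' a(6) ds(3) ds(1) ds(2)])
  finally show ?thesis
    using pushm_psum[OF ob(2,4) a(2,5) d'(2) a(8,10) d'(4)] pushm_psum[OF ob(1,3) a(7,9) d'(3) a(1,4) d'(1)]
    by (simp add: tens_triple_def srel_iff)
qed

lemma tens_of_arr: "tens_of C (arr Xs Ys t\<^sub>0) (arr Xs' Ys' s\<^sub>0) (t, s) = arr (Xs @ Xs') (Ys @ Ys') (tens_triple Xs Ys t s)"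
  by (cases t; cases s) (simp add: tens_of_def arr_def tens_triple_def)

lemma mem_tens_reps_arr_iff: "(t, s) \<in> tens_reps (arr Xs Ys t\<^sub>0) (arr Xs' Ys' s\<^sub>0) \<longleftrightarrow>
    t \<in> cls C Xs Ys t\<^sub>0 \<and> s \<in> cls C Xs' Ys' s\<^sub>0 \<and> disjoint_reps Xs Ys Xs' Ys' t s"
  by (cases t; cases s) (simp add: tens_reps_def arr_def disjoint_reps_def)

lemma tens_reps_arr_nonempty:
  assumes "set Xs \<subseteq> ob C" "set Ys \<subseteq> ob C" "set Xs' \<subseteq> ob C" "set Ys' \<subseteq> ob C"
    and "valid C Xs Ys t\<^sub>0" "valid C Xs' Ys' s\<^sub>0"
  shows "tens_reps (arr Xs Ys t\<^sub>0) (arr Xs' Ys' s\<^sub>0) \<noteq> {}"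
proof -
  have "(reindex Xs Ys t\<^sub>0 (stripe 0) (stripe 0), reindex Xs' Ys' s\<^sub>0 (stripe 1) (stripe 1))
      \<in> tens_reps (arr Xs Ys t\<^sub>0) (arr Xs' Ys' s\<^sub>0)"
    unfolding mem_tens_reps_arr_iff using assms reindex_mem_cls injm_stripe
    by (simp add: disjoint_reps_def reindex_injections stripe_disjoint)
  then show ?thesis
    by blast
qed

lemma tens_of_well_defined:
  assumes ob: "set Xs \<subseteq> ob C" "set Ys \<subseteq> ob C" "set Xs' \<subseteq> ob C" "set Ys' \<subseteq> ob C"
    and v: "valid C Xs Ys t\<^sub>0" "valid C Xs' Ys' s\<^sub>0"
    and p: "p \<in> tens_reps (arr Xs Ys t\<^sub>0) (arr Xs' Ys' s\<^sub>0)" "p' \<in> tens_reps (arr Xs Ys t\<^sub>0) (arr Xs' Ys' s\<^sub>0)"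
  shows "tens_of C (arr Xs Ys t\<^sub>0) (arr Xs' Ys' s\<^sub>0) p = tens_of C (arr Xs Ys t\<^sub>0) (arr Xs' Ys' s\<^sub>0) p'"
proof -
  obtain \<psi> f \<phi> \<rho> g \<theta> where P: "p = ((\<psi>, f, \<phi>), (\<rho>, g, \<theta>))"
    by (metis prod_cases3)
  obtain \<psi>' f' \<phi>' \<rho>' g' \<theta>' where P': "p' = ((\<psi>', f', \<phi>'), (\<rho>', g', \<theta>'))"
    by (metis prod_cases3)
  have m: "(\<psi>, f, \<phi>) \<in> cls C Xs Ys t\<^sub>0" "(\<rho>, g, \<theta>) \<in> cls C Xs' Ys' s\<^sub>0"
    "(\<psi>', f', \<phi>') \<in> cls C Xs Ys t\<^sub>0" "(\<rho>', g', \<theta>') \<in> cls C Xs' Ys' s\<^sub>0"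
    and d: "disjoint_reps Xs Ys Xs' Ys' (\<psi>, f, \<phi>) (\<rho>, g, \<theta>)"
      "disjoint_reps Xs Ys Xs' Ys' (\<psi>', f', \<phi>') (\<rho>', g', \<theta>')"
    using p unfolding P P' mem_tens_reps_arr_iff by simp_all
  have va: "valid C Xs Ys (\<psi>, f, \<phi>)" "valid C Xs' Ys' (\<rho>, g, \<theta>)"
    "valid C Xs Ys (\<psi>', f', \<phi>')" "valid C Xs' Ys' (\<rho>', g', \<theta>')"
    using m by (simp_all add: mem_cls_iff)
  have r: "srel C Xs Ys (\<psi>, f, \<phi>) (\<psi>', f', \<phi>')" "srel C Xs' Ys' (\<rho>, g, \<theta>) (\<rho>', g', \<theta>')"
    using srel_if_mem_cls[OF ob(1,2) v(1) m(1) m(3)] srel_if_mem_cls[OF ob(3,4) v(2) m(2) m(4)] .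
  show ?thesis
    unfolding P P' tens_of_arr using ob
    by (intro arr_eqI valid_tens_triple[OF ob va(1,2) d(1)] valid_tens_triple[OF ob va(3,4) d(2)]
        srel_tens_triple[OF ob va r d]) auto
qed

lemma sigma_tens_arr_eq_tens_of:
  assumes "set Xs \<subseteq> ob C" "set Ys \<subseteq> ob C" "set Xs' \<subseteq> ob C" "set Ys' \<subseteq> ob C"
    and "valid C Xs Ys t\<^sub>0" "valid C Xs' Ys' s\<^sub>0"
    and p: "p \<in> tens_reps (arr Xs Ys t\<^sub>0) (arr Xs' Ys' s\<^sub>0)"
  shows "sigma_tens C (arr Xs Ys t\<^sub>0) (arr Xs' Ys' s\<^sub>0) = tens_of C (arr Xs Ys t\<^sub>0) (arr Xs' Ys' s\<^sub>0) p"
  unfolding sigma_tens_def using tens_of_well_defined[OF assms(1-6) _ p] p by (metis someI)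

lemma sigma_tens_arr:
  assumes ob: "set Xs \<subseteq> ob C" "set Ys \<subseteq> ob C" "set Xs' \<subseteq> ob C" "set Ys' \<subseteq> ob C"
    and v: "valid C Xs Ys t" "valid C Xs' Ys' s" and d: "disjoint_reps Xs Ys Xs' Ys' t s"
  shows "sigma_tens C (arr Xs Ys t) (arr Xs' Ys' s) = arr (Xs @ Xs') (Ys @ Ys') (tens_triple Xs Ys t s)"
proof -
  have "(t, s) \<in> tens_reps (arr Xs Ys t) (arr Xs' Ys' s)"
    unfolding mem_tens_reps_arr_iff using mem_cls_self ob v d by simp
  then show ?thesis
    using sigma_tens_arr_eq_tens_of[OF ob v] tens_of_arr by simp
qed

lemma sigma_tens_stripes:
  assumes ob: "set Xs \<subseteq> ob C" "set Ys \<subseteq> ob C" "set Xs' \<subseteq> ob C" "set Ys' \<subseteq> ob C"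
    and v: "valid C Xs Ys (stripe k, f, stripe k)" "valid C Xs' Ys' (stripe k', g, stripe k')"
    and k: "k \<noteq> k'" "k < 3" "k' < 3"
  defines "t \<equiv> (psum (length Ys) (stripe k) (stripe k'), plsm C f g, psum (length Xs) (stripe k) (stripe k'))"
  shows "sigma_tens C (arr Xs Ys (stripe k, f, stripe k)) (arr Xs' Ys' (stripe k', g, stripe k')) =
      arr (Xs @ Xs') (Ys @ Ys') t"
    and "valid C (Xs @ Xs') (Ys @ Ys') t"
proof -
  have "disjoint_reps Xs Ys Xs' Ys' (stripe k, f, stripe k) (stripe k', g, stripe k')"
    using k by (simp add: disjoint_reps_def stripe_disjoint)
  then show "sigma_tens C (arr Xs Ys (stripe k, f, stripe k)) (arr Xs' Ys' (stripe k', g, stripe k')) =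
      arr (Xs @ Xs') (Ys @ Ys') t" and "valid C (Xs @ Xs') (Ys @ Ys') t"
    using sigma_tens_arr[OF ob v] valid_tens_triple[OF ob v] by (simp_all add: t_def tens_triple_def)
qed

text \<open>Identities and symmetries of \<open>\<Sigma>(C)\<close> are of this form, and
  composition and tensor product act on them through the injections alone.\<close>

definition canon :: "'o list \<Rightarrow> 'o list \<Rightarrow> (nat \<Rightarrow> nat \<Rightarrow> nat) \<Rightarrow> (nat \<Rightarrow> nat \<Rightarrow> nat) \<Rightarrow> ('o, 'm) sarr"
  where "canon Xs Ys \<psi> \<phi> = arr Xs Ys (\<psi>, idn C (push C \<phi> Xs), \<phi>)"

lemma valid_canon_triple:
  "set Xs \<subseteq> ob C \<Longrightarrow> injm (length Xs) \<phi> \<Longrightarrow> injm (length Ys) \<psi> \<Longrightarrow> push C \<psi> Ys = push C \<phi> Xs \<Longrightarrow>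
    valid C Xs Ys (\<psi>, idn C (push C \<phi> Xs), \<phi>)"
  by (simp add: valid_iff idn_in_hom push_in_ob)

lemma idn_sigma_cat_canon: "set Xs \<subseteq> ob C \<Longrightarrow> injm (length Xs) \<phi> \<Longrightarrow> idn SC Xs = canon Xs Xs \<phi> \<phi>"
  unfolding canon_def by (rule idn_sigma_cat_eq)

lemma valid_tau_triple:
  assumes "set Xs \<subseteq> ob C" "set Ys \<subseteq> ob C" "injm (length Xs + length Ys) \<phi>"
  shows "valid C (Xs @ Ys) (Ys @ Xs) (phibar (length Xs) (length Ys) \<phi>, idn C (push C \<phi> (Xs @ Ys)), \<phi>)"
  using assms injm_phibar push_phibar by (intro valid_canon_triple) (simp_all add: add.commute)

lemma tau_of_well_defined:
  assumes ob: "set Xs \<subseteq> ob C" "set Ys \<subseteq> ob C"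
    and inj: "injm (length Xs + length Ys) \<phi>" "injm (length Xs + length Ys) \<phi>'"
  shows "tau_of C Xs Ys \<phi> = tau_of C Xs Ys \<phi>'"
proof -
  have "srel C (Xs @ Ys) (Ys @ Xs)
      (phibar (length Xs) (length Ys) \<phi>, idn C (push C \<phi> (Xs @ Ys)), \<phi>)
      (phibar (length Xs) (length Ys) \<phi>', idn C (push C \<phi>' (Xs @ Ys)), \<phi>')"
    unfolding srel_iff pushm_phibar[OF ob inj] using ob inj by (simp add: arrow_simps)
  then show ?thesis
    unfolding tau_of_def using ob valid_tau_triple[OF ob inj(1)] valid_tau_triple[OF ob inj(2)]
    by (simp add: arr_eqI[simplified arr_def])
qed

lemma sigma_tau_canon:
  "set Xs \<subseteq> ob C \<Longrightarrow> set Ys \<subseteq> ob C \<Longrightarrow> injm (length Xs + length Ys) \<phi> \<Longrightarrow>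
    sigma_tau C Xs Ys = canon (Xs @ Ys) (Ys @ Xs) (phibar (length Xs) (length Ys) \<phi>) \<phi>"
  unfolding sigma_tau_def using tau_of_well_defined[of Xs Ys phi0 \<phi>] injm_phi0
  by (simp add: tau_of_def canon_def arr_def)

lemma cmp_canon_arr:
  assumes "set Xs \<subseteq> ob C" "set Ys \<subseteq> ob C" "set Zs \<subseteq> ob C"
    and "valid C Xs Ys (\<psi>, f, \<phi>)" "valid C Ys Zs (\<rho>, idn C (push C \<psi> Ys), \<psi>)"
  shows "cmp SC (canon Ys Zs \<rho> \<psi>) (arr Xs Ys (\<psi>, f, \<phi>)) = arr Xs Zs (\<rho>, f, \<phi>)"
  using cmp_arr_matching[OF assms] assms(4) cmp_idn_left[of f "push C \<phi> Xs" "push C \<psi> Ys"]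
  unfolding canon_def by (simp add: valid_iff)

lemma cmp_arr_canon:
  assumes "set Xs \<subseteq> ob C" "set Ys \<subseteq> ob C" "set Zs \<subseteq> ob C"
    and "valid C Xs Ys (\<psi>, idn C (push C \<phi> Xs), \<phi>)" "valid C Ys Zs (\<rho>, g, \<psi>)"
  shows "cmp SC (arr Ys Zs (\<rho>, g, \<psi>)) (canon Xs Ys \<psi> \<phi>) = arr Xs Zs (\<rho>, g, \<phi>)"
proof -
  have "push C \<psi> Ys = push C \<phi> Xs"
    using assms(1,4) cd_idn[OF push_in_ob[OF assms(1)], of \<phi>] by (simp add: valid_iff hom_def)
  then show ?thesis
    using cmp_arr_matching[OF assms] assms(5) unfolding canon_def
    by (simp add: valid_iff hom_def cmp_idn_right_ar)
qed

lemma canon_cong: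
  assumes "set Xs \<subseteq> ob C" "set Ys \<subseteq> ob C" "valid C Xs Ys (\<psi>, idn C (push C \<phi> Xs), \<phi>)"
    and "\<And>i. i < length Ys \<Longrightarrow> \<psi> i = \<psi>' i" "\<And>i. i < length Xs \<Longrightarrow> \<phi> i = \<phi>' i"
  shows "canon Xs Ys \<psi>' \<phi>' = canon Xs Ys \<psi> \<phi>"
  using arr_cong[OF assms] push_cong[of Xs \<phi> \<phi>' C] assms(5) unfolding canon_def by simp

lemma cmp_canon:
  assumes "set Xs \<subseteq> ob C" "set Ys \<subseteq> ob C" "set Zs \<subseteq> ob C"
    and "valid C Xs Ys (\<psi>, idn C (push C \<phi> Xs), \<phi>)" "valid C Ys Zs (\<rho>, idn C (push C \<psi> Ys), \<psi>)"
  shows "cmp SC (canon Ys Zs \<rho> \<psi>) (canon Xs Ys \<psi> \<phi>) = canon Xs Zs \<rho> \<phi>"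
  using cmp_canon_arr[OF assms] by (simp add: canon_def)

lemma sigma_tens_canon:
  assumes ob: "set Xs \<subseteq> ob C" "set Ys \<subseteq> ob C" "set Xs' \<subseteq> ob C" "set Ys' \<subseteq> ob C"
    and v: "valid C Xs Ys (\<psi>, idn C (push C \<phi> Xs), \<phi>)" "valid C Xs' Ys' (\<rho>, idn C (push C \<theta> Xs'), \<theta>)"
    and d: "imm (length Xs) \<phi> \<inter> imm (length Xs') \<theta> = {}" "imm (length Ys) \<psi> \<inter> imm (length Ys') \<rho> = {}"
  shows "sigma_tens C (canon Xs Ys \<psi> \<phi>) (canon Xs' Ys' \<rho> \<theta>) =
      canon (Xs @ Xs') (Ys @ Ys') (psum (length Ys) \<psi> \<rho>) (psum (length Xs) \<phi> \<theta>)"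
    and "valid C (Xs @ Xs') (Ys @ Ys')
      (psum (length Ys) \<psi> \<rho>, idn C (push C (psum (length Xs) \<phi> \<theta>) (Xs @ Xs')), psum (length Xs) \<phi> \<theta>)"
proof -
  have inj: "injm (length Xs) \<phi>" "injm (length Xs') \<theta>"
    using v by (simp_all add: valid_iff)
  have "plsm C (idn C (push C \<phi> Xs)) (idn C (push C \<theta> Xs')) = idn C (push C (psum (length Xs) \<phi> \<theta>) (Xs @ Xs'))"
    using plsm_idn push_in_ob push_dsj push_psum ob inj d by simp
  then show "sigma_tens C (canon Xs Ys \<psi> \<phi>) (canon Xs' Ys' \<rho> \<theta>) =
      canon (Xs @ Xs') (Ys @ Ys') (psum (length Ys) \<psi> \<rho>) (psum (length Xs) \<phi> \<theta>)"
    and "valid C (Xs @ Xs') (Ys @ Ys')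
      (psum (length Ys) \<psi> \<rho>, idn C (push C (psum (length Xs) \<phi> \<theta>) (Xs @ Xs')), psum (length Xs) \<phi> \<theta>)"
    unfolding canon_def using sigma_tens_arr[OF ob v] valid_tens_triple[OF ob v] d
    by (simp_all add: disjoint_reps_def tens_triple_def)
qed

lemma sigma_tens_in_hom:
  assumes "a \<in> ar SC" "b \<in> ar SC"
  shows "sigma_tens C a b \<in> hom SC (dm SC a @ dm SC b) (cd SC a @ cd SC b)"
proof -
  obtain Xs Ys f where a: "a = arr Xs Ys (stripe 0, f, stripe 0)" "set Xs \<subseteq> ob C" "set Ys \<subseteq> ob C"
    "valid C Xs Ys (stripe 0, f, stripe 0)"
    using ar_sigma_cat_obtain[OF assms(1) injm_stripe injm_stripe] .
  obtain Xs' Ys' g where b: "b = arr Xs' Ys' (stripe 1, g, stripe 1)" "set Xs' \<subseteq> ob C" "set Ys' \<subseteq> ob C"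
    "valid C Xs' Ys' (stripe 1, g, stripe 1)"
    using ar_sigma_cat_obtain[OF assms(2) injm_stripe injm_stripe] .
  show ?thesis
    using sigma_tens_stripes[OF a(2,3) b(2,3) a(4) b(4)] a b by (simp add: dm_arr cd_arr arr_in_hom)
qed

lemma sigma_tens_idn:
  assumes "set Xs \<subseteq> ob C" "set Ys \<subseteq> ob C"
  shows "sigma_tens C (idn SC Xs) (idn SC Ys) = idn SC (Xs @ Ys)"
proof -
  have "sigma_tens C (idn SC Xs) (idn SC Ys) =
      canon (Xs @ Ys) (Xs @ Ys) (psum (length Xs) (stripe 0) (stripe 1)) (psum (length Xs) (stripe 0) (stripe 1))"
    using idn_sigma_cat_canon[OF assms(1) injm_stripe[of _ 0]] idn_sigma_cat_canon[OF assms(2) injm_stripe[of _ 1]]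
      sigma_tens_canon(1)[OF assms(1,1,2,2) valid_canon_triple valid_canon_triple] assms injm_stripe stripe_disjoint
    by simp
  also have "\<dots> = idn SC (Xs @ Ys)"
    using assms idn_sigma_cat_canon injm_psum[OF injm_stripe injm_stripe stripe_disjoint, of 0 1 "length Xs" "length Ys"]
    by simp
  finally show ?thesis .
qed

lemma sigma_tau_in_hom:
  "set Xs \<subseteq> ob C \<Longrightarrow> set Ys \<subseteq> ob C \<Longrightarrow> sigma_tau C Xs Ys \<in> hom SC (Xs @ Ys) (Ys @ Xs)"
  unfolding sigma_tau_def tau_of_def using valid_tau_triple injm_phi0
  by (metis arr_def arr_in_hom set_append le_sup_iff)

lemma sigma_tau_Nil: "set Xs \<subseteq> ob C \<Longrightarrow> sigma_tau C Xs [] = idn SC Xs"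
  by (simp add: sigma_tau_def tau_of_def phibar_0 sigma_cat_simps arr_def)

lemma sigma_tens_cmp:
  assumes "a \<in> ar SC" "b \<in> ar SC" "a' \<in> ar SC" "b' \<in> ar SC"
    and "dm SC a' = cd SC a" "dm SC b' = cd SC b"
  shows "sigma_tens C (cmp SC a' a) (cmp SC b' b) = cmp SC (sigma_tens C a' b') (sigma_tens C a b)"
proof -
  obtain Xs Ys f where a: "a = arr Xs Ys (stripe 0, f, stripe 0)" "set Xs \<subseteq> ob C" "set Ys \<subseteq> ob C"
    "valid C Xs Ys (stripe 0, f, stripe 0)"
    using ar_sigma_cat_obtain[OF assms(1) injm_stripe injm_stripe] .
  obtain Xs' Ys' g where b: "b = arr Xs' Ys' (stripe 1, g, stripe 1)" "set Xs' \<subseteq> ob C" "set Ys' \<subseteq> ob C"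
    "valid C Xs' Ys' (stripe 1, g, stripe 1)"
    using ar_sigma_cat_obtain[OF assms(2) injm_stripe injm_stripe] .
  obtain Zs f' where a': "a' = arr Ys Zs (stripe 0, f', stripe 0)" "set Zs \<subseteq> ob C"
    "valid C Ys Zs (stripe 0, f', stripe 0)"
    using ar_sigma_cat_obtain[OF assms(3) injm_stripe injm_stripe] assms(5) a(1) by (metis dm_arr cd_arr)
  obtain Zs' g' where b': "b' = arr Ys' Zs' (stripe 1, g', stripe 1)" "set Zs' \<subseteq> ob C"
    "valid C Ys' Zs' (stripe 1, g', stripe 1)"
    using ar_sigma_cat_obtain[OF assms(4) injm_stripe injm_stripe] assms(6) b(1) by (metis dm_arr cd_arr)
  have h: "f \<in> hom C (push C (stripe 0) Xs) (push C (stripe 0) Ys)" "f' \<in> hom C (push C (stripe 0) Ys) (push C (stripe 0) Zs)"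
    "g \<in> hom C (push C (stripe 1) Xs') (push C (stripe 1) Ys')" "g' \<in> hom C (push C (stripe 1) Ys') (push C (stripe 1) Zs')"
    using a b a' b' by (simp_all add: valid_iff)
  have d: "dsj C (push C (stripe 0) Xs) (push C (stripe 1) Xs')" "dsj C (push C (stripe 0) Ys) (push C (stripe 1) Ys')"
    "dsj C (push C (stripe 0) Zs) (push C (stripe 1) Zs')"
    using push_dsj[OF _ _ injm_stripe injm_stripe stripe_disjoint] a b a' b' by simp_all
  let ?pX = "psum (length Xs) (stripe 0) (stripe 1)" and ?pY = "psum (length Ys) (stripe 0) (stripe 1)"
    and ?pZ = "psum (length Zs) (stripe 0) (stripe 1)"
  have "valid C Xs Zs (stripe 0, cmp C f' f, stripe 0)" "valid C Xs' Zs' (stripe 1, cmp C g' g, stripe 1)"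
    using h injm_stripe by (simp_all add: valid_iff cmp_in_hom)
  moreover have "cmp SC a' a = arr Xs Zs (stripe 0, cmp C f' f, stripe 0)"
    and "cmp SC b' b = arr Xs' Zs' (stripe 1, cmp C g' g, stripe 1)"
    using a b a' b' by (simp_all add: cmp_arr_matching)
  ultimately have "sigma_tens C (cmp SC a' a) (cmp SC b' b) =
      arr (Xs @ Xs') (Zs @ Zs') (?pZ, plsm C (cmp C f' f) (cmp C g' g), ?pX)"
    using sigma_tens_stripes(1)[OF a(2) a'(2) b(2) b'(2)] by simp
  also have "\<dots> = arr (Xs @ Xs') (Zs @ Zs') (?pZ, cmp C (plsm C f' g') (plsm C f g), ?pX)"
    using plsm_cmp[OF h d] by simp
  also have "\<dots> = cmp SC (sigma_tens C a' b') (sigma_tens C a b)"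
    using sigma_tens_stripes[OF a(2,3) b(2,3) a(4) b(4)] sigma_tens_stripes[OF a(3) a'(2) b(3) b'(2) a'(3) b'(3)]
      a(2,3) b(2,3) a'(2) b'(2) unfolding a(1) b(1) a'(1) b'(1)
    by (simp add: cmp_arr_matching)
  finally show ?thesis .
qed

lemma sigma_tens_unit:
  assumes "a \<in> ar SC"
  shows "sigma_tens C (idn SC []) a = a" "sigma_tens C a (idn SC []) = a"
proof -
  obtain Xs Ys f where a: "a = arr Xs Ys (stripe 0, f, stripe 0)" "set Xs \<subseteq> ob C" "set Ys \<subseteq> ob C"
    "valid C Xs Ys (stripe 0, f, stripe 0)"
    using ar_sigma_cat_obtain[OF assms(1) injm_stripe injm_stripe] .
  have f: "f \<in> ar C"
    using a(4) by (simp add: valid_iff hom_def)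
  have e: "idn SC [] = arr [] [] (stripe 1, idn C (zer C), stripe 1)"
    using idn_sigma_cat_eq[of "[]" "stripe 1"] injm_stripe by (simp add: push_Nil)
  have ve: "valid C [] [] (stripe 1, idn C (zer C), stripe 1)"
    using injm_stripe zer_in_ob by (simp add: push_Nil valid_iff idn_in_hom)
  have ob: "set ([] :: 'o list) \<subseteq> ob C"
    by simp
  show "sigma_tens C (idn SC []) a = a"
    using sigma_tens_stripes(1)[OF ob ob a(2,3) ve a(4)] a(1) plsm_idn_zer(2)[OF f] by (simp add: e psum_0)
  have "sigma_tens C a (idn SC []) =
      arr Xs Ys (psum (length Ys) (stripe 0) (stripe 1), f, psum (length Xs) (stripe 0) (stripe 1))"
    using sigma_tens_stripes(1)[OF a(2,3) ob ob a(4) ve] a(1) plsm_idn_zer(1)[OF f] by (simp add: e)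
  also have "\<dots> = a"
    unfolding a(1) by (rule arr_cong[OF a(2,3,4)]) (simp_all add: psum_less)
  finally show "sigma_tens C a (idn SC []) = a" .
qed

lemma sigma_tens_assoc:
  assumes "a \<in> ar SC" "b \<in> ar SC" "c \<in> ar SC"
  shows "sigma_tens C (sigma_tens C a b) c = sigma_tens C a (sigma_tens C b c)"
proof -
  obtain Xs Ys f where a: "a = arr Xs Ys (stripe 0, f, stripe 0)" "set Xs \<subseteq> ob C" "set Ys \<subseteq> ob C"
    "valid C Xs Ys (stripe 0, f, stripe 0)"
    using ar_sigma_cat_obtain[OF assms(1) injm_stripe injm_stripe] .
  obtain Xs' Ys' g where b: "b = arr Xs' Ys' (stripe 1, g, stripe 1)" "set Xs' \<subseteq> ob C" "set Ys' \<subseteq> ob C"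
    "valid C Xs' Ys' (stripe 1, g, stripe 1)"
    using ar_sigma_cat_obtain[OF assms(2) injm_stripe injm_stripe] .
  obtain Xs'' Ys'' h where c: "c = arr Xs'' Ys'' (stripe 2, h, stripe 2)" "set Xs'' \<subseteq> ob C" "set Ys'' \<subseteq> ob C"
    "valid C Xs'' Ys'' (stripe 2, h, stripe 2)"
    using ar_sigma_cat_obtain[OF assms(3) injm_stripe injm_stripe] .
  have hom: "f \<in> hom C (push C (stripe 0) Xs) (push C (stripe 0) Ys)"
    "g \<in> hom C (push C (stripe 1) Xs') (push C (stripe 1) Ys')"
    "h \<in> hom C (push C (stripe 2) Xs'') (push C (stripe 2) Ys'')"
    using a b c by (simp_all add: valid_iff)
  have dsj: "dsj C (push C (stripe 0) Xs) (push C (stripe 1) Xs')" "dsj C (push C (stripe 0) Ys) (push C (stripe 1) Ys')"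
    "dsj C (push C (stripe 0) Xs) (push C (stripe 2) Xs'')" "dsj C (push C (stripe 0) Ys) (push C (stripe 2) Ys'')"
    "dsj C (push C (stripe 1) Xs') (push C (stripe 2) Xs'')" "dsj C (push C (stripe 1) Ys') (push C (stripe 2) Ys'')"
    using push_dsj[OF _ _ injm_stripe injm_stripe stripe_disjoint] a b c by simp_all
  note ab = sigma_tens_stripes[OF a(2,3) b(2,3) a(4) b(4)]
    and bc = sigma_tens_stripes[OF b(2,3) c(2,3) b(4) c(4)]
  have "sigma_tens C (sigma_tens C a b) c = arr ((Xs @ Xs') @ Xs'') ((Ys @ Ys') @ Ys'')
      (psum (length Ys + length Ys') (psum (length Ys) (stripe 0) (stripe 1)) (stripe 2), plsm C (plsm C f g) h,
       psum (length Xs + length Xs') (psum (length Xs) (stripe 0) (stripe 1)) (stripe 2))"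
    using sigma_tens_arr ab a b c
    by (simp add: disjoint_reps_def imm_psum Int_Un_distrib2 stripe_disjoint tens_triple_def)
  also have "\<dots> = arr (Xs @ Xs' @ Xs'') (Ys @ Ys' @ Ys'')
      (psum (length Ys) (stripe 0) (psum (length Ys') (stripe 1) (stripe 2)), plsm C f (plsm C g h),
       psum (length Xs) (stripe 0) (psum (length Xs') (stripe 1) (stripe 2)))"
    using plsm_assoc[OF hom dsj] by (simp add: psum_assoc)
  also have "\<dots> = sigma_tens C a (sigma_tens C b c)"
    using sigma_tens_arr bc a b c
    by (simp add: disjoint_reps_def imm_psum Int_Un_distrib stripe_disjoint tens_triple_def)
  finally show ?thesis .
qed

lemma sigma_tens_stripes_swap:
  assumes ob: "set Xs \<subseteq> ob C" "set Ys \<subseteq> ob C" "set Xs' \<subseteq> ob C" "set Ys' \<subseteq> ob C"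
    and v: "valid C Xs Ys (stripe 0, f, stripe 0)" "valid C Xs' Ys' (stripe 1, g, stripe 1)"
  defines "t \<equiv> (phibar (length Ys) (length Ys') (psum (length Ys) (stripe 0) (stripe 1)), plsm C f g,
    phibar (length Xs) (length Xs') (psum (length Xs) (stripe 0) (stripe 1)))"
  shows "sigma_tens C (arr Xs' Ys' (stripe 1, g, stripe 1)) (arr Xs Ys (stripe 0, f, stripe 0)) =
      arr (Xs' @ Xs) (Ys' @ Ys) t"
    and "valid C (Xs' @ Xs) (Ys' @ Ys) t"
proof -
  have hom: "f \<in> hom C (push C (stripe 0) Xs) (push C (stripe 0) Ys)"
    "g \<in> hom C (push C (stripe 1) Xs') (push C (stripe 1) Ys')"
    using v by (simp_all add: valid_iff)
  have "plsm C g f = plsm C f g"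
    by (rule plsm_commute[OF hom(2,1) push_dsj push_dsj]) (use ob injm_stripe stripe_disjoint in auto)
  then have "sigma_tens C (arr Xs' Ys' (stripe 1, g, stripe 1)) (arr Xs Ys (stripe 0, f, stripe 0)) =
      arr (Xs' @ Xs) (Ys' @ Ys) (psum (length Ys') (stripe 1) (stripe 0), plsm C f g,
        psum (length Xs') (stripe 1) (stripe 0))"
    and v': "valid C (Xs' @ Xs) (Ys' @ Ys) (psum (length Ys') (stripe 1) (stripe 0), plsm C f g,
        psum (length Xs') (stripe 1) (stripe 0))"
    using sigma_tens_stripes[OF ob(3,4,1,2) v(2,1)] by simp_all
  moreover have "arr (Xs' @ Xs) (Ys' @ Ys) (psum (length Ys') (stripe 1) (stripe 0), plsm C f g,
      psum (length Xs') (stripe 1) (stripe 0)) = arr (Xs' @ Xs) (Ys' @ Ys) t"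
    unfolding t_def by (rule arr_cong[OF _ _ v', symmetric]) (use ob in \<open>simp_all add: phibar_psum\<close>)
  ultimately show "sigma_tens C (arr Xs' Ys' (stripe 1, g, stripe 1)) (arr Xs Ys (stripe 0, f, stripe 0)) =
      arr (Xs' @ Xs) (Ys' @ Ys) t"
    by simp
  show "valid C (Xs' @ Xs) (Ys' @ Ys) t"
    unfolding t_def by (rule valid_cong[OF v']) (simp_all add: phibar_psum)
qed

lemma sigma_tau_natural:
  assumes "a \<in> ar SC" "b \<in> ar SC"
  shows "cmp SC (sigma_tau C (cd SC a) (cd SC b)) (sigma_tens C a b) =
    cmp SC (sigma_tens C b a) (sigma_tau C (dm SC a) (dm SC b))"
proof -
  obtain Xs Ys f where a: "a = arr Xs Ys (stripe 0, f, stripe 0)" "set Xs \<subseteq> ob C" "set Ys \<subseteq> ob C"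
    "valid C Xs Ys (stripe 0, f, stripe 0)"
    using ar_sigma_cat_obtain[OF assms(1) injm_stripe injm_stripe] .
  obtain Xs' Ys' g where b: "b = arr Xs' Ys' (stripe 1, g, stripe 1)" "set Xs' \<subseteq> ob C" "set Ys' \<subseteq> ob C"
    "valid C Xs' Ys' (stripe 1, g, stripe 1)"
    using ar_sigma_cat_obtain[OF assms(2) injm_stripe injm_stripe] .
  let ?pX = "psum (length Xs) (stripe 0) (stripe 1)" and ?pY = "psum (length Ys) (stripe 0) (stripe 1)"
  have ob: "set (Xs @ Xs') \<subseteq> ob C" "set (Ys @ Ys') \<subseteq> ob C" "set (Xs' @ Xs) \<subseteq> ob C" "set (Ys' @ Ys) \<subseteq> ob C"
    using a b by auto
  have inj: "injm (length Xs + length Xs') ?pX" "injm (length Ys + length Ys') ?pY"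
    using injm_psum[OF injm_stripe injm_stripe stripe_disjoint] by simp_all
  note ab = sigma_tens_stripes[OF a(2,3) b(2,3) a(4) b(4)]
    and ba = sigma_tens_stripes_swap[OF a(2,3) b(2,3) a(4) b(4)]
  have "cmp SC (sigma_tau C (cd SC a) (cd SC b)) (sigma_tens C a b) =
      arr (Xs @ Xs') (Ys' @ Ys) (phibar (length Ys) (length Ys') ?pY, plsm C f g, ?pX)"
    using cmp_canon_arr[OF ob(1,2,4) ab(2) valid_tau_triple[OF a(3) b(3) inj(2)]]
      ab(1) sigma_tau_canon[OF a(3) b(3) inj(2)] a(1) b(1)
    by (simp add: cd_arr)
  also have "\<dots> = cmp SC (sigma_tens C b a) (sigma_tau C (dm SC a) (dm SC b))"
    using cmp_arr_canon[OF ob(1,3,4) valid_tau_triple[OF a(2) b(2) inj(1)] ba(2)]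
      ba(1) sigma_tau_canon[OF a(2) b(2) inj(1)] a(1) b(1)
    by (simp add: dm_arr)
  finally show ?thesis .
qed

lemma sigma_tau_involutive:
  assumes X: "set X \<subseteq> ob C" and Y: "set Y \<subseteq> ob C"
  shows "cmp SC (sigma_tau C Y X) (sigma_tau C X Y) = idn SC (X @ Y)"
proof -
  let ?\<phi> = "phibar (length X) (length Y) phi0"
  have inj: "injm (length Y + length X) ?\<phi>"
    using injm_phibar[OF injm_phi0] .
  have ob: "set (X @ Y) \<subseteq> ob C" "set (Y @ X) \<subseteq> ob C"
    using X Y by simp_all
  have "cmp SC (sigma_tau C Y X) (sigma_tau C X Y) =
      canon (X @ Y) (X @ Y) (phibar (length Y) (length X) ?\<phi>) phi0"
    using sigma_tau_canon[OF X Y injm_phi0] sigma_tau_canon[OF Y X inj]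
      cmp_canon[OF ob(1,2,1) valid_tau_triple[OF X Y injm_phi0] valid_tau_triple[OF Y X inj]]
    by simp
  also have "\<dots> = canon (X @ Y) (X @ Y) phi0 phi0"
    using injm_phi0 by (intro canon_cong[OF ob(1,1) valid_canon_triple[OF ob(1)]]) (simp_all add: phibar_phibar)
  also have "\<dots> = idn SC (X @ Y)"
    using idn_sigma_cat_canon[OF ob(1) injm_phi0] ..
  finally show ?thesis .
qed

lemma sigma_tens_tau_idn:
  assumes X: "set X \<subseteq> ob C" and Y: "set Y \<subseteq> ob C" and Z: "set Z \<subseteq> ob C"
  defines "\<chi> \<equiv> psum (length Y + length X) (phibar (length X) (length Y) phi0)
    (\<lambda>i. phi0 (i + (length X + length Y)))"
  shows "sigma_tens C (sigma_tau C X Y) (idn SC Z) = canon (X @ Y @ Z) (Y @ X @ Z) \<chi> phi0"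
    and "valid C (X @ Y @ Z) (Y @ X @ Z) (\<chi>, idn C (push C phi0 (X @ Y @ Z)), phi0)"
proof -
  let ?a = "length X" and ?b = "length Y" and ?c = "length Z"
  let ?\<phi>\<^sub>Z = "\<lambda>i. phi0 (i + (?a + ?b))"
  have inj: "injm ?c ?\<phi>\<^sub>Z"
    using injm_shift[OF injm_phi0[of "?a + ?b + ?c"]] by simp
  have d: "imm (?a + ?b) phi0 \<inter> imm ?c ?\<phi>\<^sub>Z = {}"
    unfolding imm_shift imm_eq_rows_image by (rule phi0_rows_image_disjoint) auto
  have "sigma_tens C (sigma_tau C X Y) (idn SC Z) =
      canon ((X @ Y) @ Z) ((Y @ X) @ Z) \<chi> (psum (?a + ?b) phi0 ?\<phi>\<^sub>Z)"
    and "valid C ((X @ Y) @ Z) ((Y @ X) @ Z)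
      (\<chi>, idn C (push C (psum (?a + ?b) phi0 ?\<phi>\<^sub>Z) ((X @ Y) @ Z)), psum (?a + ?b) phi0 ?\<phi>\<^sub>Z)"
    using sigma_tens_canon[OF _ _ Z Z valid_tau_triple[OF X Y injm_phi0] valid_canon_triple[OF Z inj inj]]
      sigma_tau_canon[OF X Y injm_phi0] idn_sigma_cat_canon[OF Z inj] X Y d imm_phibar[of ?b ?a phi0]
    by (simp_all add: \<chi>_def add.commute)
  then show "sigma_tens C (sigma_tau C X Y) (idn SC Z) = canon (X @ Y @ Z) (Y @ X @ Z) \<chi> phi0"
    and "valid C (X @ Y @ Z) (Y @ X @ Z) (\<chi>, idn C (push C phi0 (X @ Y @ Z)), phi0)"
    by (simp_all add: psum_shift_self)
qed

lemma sigma_tens_idn_tau: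
  assumes X: "set X \<subseteq> ob C" and Y: "set Y \<subseteq> ob C" and Z: "set Z \<subseteq> ob C"
  defines "\<phi>\<^sub>Z \<equiv> \<lambda>i. phi0 (i + (length X + length Y))"
  defines "\<rho> \<equiv> psum (length Y) (\<lambda>i. phi0 (i + length X)) (phibar (length X) (length Z) (psum (length X) phi0 \<phi>\<^sub>Z))"
    and "\<chi> \<equiv> psum (length Y + length X) (phibar (length X) (length Y) phi0) \<phi>\<^sub>Z"
  shows "sigma_tens C (idn SC Y) (sigma_tau C X Z) = canon (Y @ X @ Z) (Y @ Z @ X) \<rho> \<chi>"
    and "valid C (Y @ X @ Z) (Y @ Z @ X) (\<rho>, idn C (push C \<chi> (Y @ X @ Z)), \<chi>)"
proof -
  let ?a = "length X" and ?b = "length Y" and ?c = "length Z"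
  let ?\<phi>\<^sub>Y = "\<lambda>i. phi0 (i + ?a)" and ?\<phi>\<^sub>X\<^sub>Z = "psum ?a phi0 \<phi>\<^sub>Z"
  have inj: "injm ?b ?\<phi>\<^sub>Y" "injm ?c \<phi>\<^sub>Z"
    using injm_shift[OF injm_phi0[of "?a + ?b"]] injm_shift[OF injm_phi0[of "?a + ?b + ?c"]]
    by (simp_all add: \<phi>\<^sub>Z_def)
  have "imm ?a phi0 \<inter> imm ?c \<phi>\<^sub>Z = {}"
    unfolding \<phi>\<^sub>Z_def imm_shift imm_eq_rows_image by (rule phi0_rows_image_disjoint) auto
  then have injXZ: "injm (?a + ?c) ?\<phi>\<^sub>X\<^sub>Z"
    using injm_psum[OF injm_phi0 inj(2)] by simp
  have "imm ?b ?\<phi>\<^sub>Y \<inter> imm (?a + ?c) ?\<phi>\<^sub>X\<^sub>Z = {}"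
    unfolding imm_psum unfolding \<phi>\<^sub>Z_def imm_shift imm_eq_rows_image Int_Un_distrib
    by (intro Un_empty[THEN iffD2] conjI; rule phi0_rows_image_disjoint; auto)
  then show "sigma_tens C (idn SC Y) (sigma_tau C X Z) = canon (Y @ X @ Z) (Y @ Z @ X) \<rho> \<chi>"
    and "valid C (Y @ X @ Z) (Y @ Z @ X) (\<rho>, idn C (push C \<chi> (Y @ X @ Z)), \<chi>)"
    using sigma_tens_canon[OF Y Y _ _ valid_canon_triple[OF Y inj(1) inj(1)] valid_tau_triple[OF X Z injXZ]]
      sigma_tau_canon[OF X Z injXZ] idn_sigma_cat_canon[OF Y inj(1)] X Z imm_phibar[of ?c ?a ?\<phi>\<^sub>X\<^sub>Z]
    by (simp_all add: \<rho>_def \<chi>_def \<phi>\<^sub>Z_def psum_shift_phibar add.commute)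
qed

lemma sigma_tau_hexagon:
  assumes X: "set X \<subseteq> ob C" and Y: "set Y \<subseteq> ob C" and Z: "set Z \<subseteq> ob C"
  shows "sigma_tau C X (Y @ Z) =
    cmp SC (sigma_tens C (idn SC Y) (sigma_tau C X Z)) (sigma_tens C (sigma_tau C X Y) (idn SC Z))"
proof -
  have ob: "set (X @ Y @ Z) \<subseteq> ob C" "set (Y @ X @ Z) \<subseteq> ob C" "set (Y @ Z @ X) \<subseteq> ob C"
    using X Y Z by simp_all
  note T1 = sigma_tens_tau_idn[OF X Y Z] and T2 = sigma_tens_idn_tau[OF X Y Z]
  have "sigma_tau C X (Y @ Z) = canon (X @ Y @ Z) (Y @ Z @ X) (phibar (length X) (length Y + length Z) phi0) phi0"
    using sigma_tau_canon[OF X _ injm_phi0] Y Z by simp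
  also have "\<dots> = canon (X @ Y @ Z) (Y @ Z @ X) (psum (length Y) (\<lambda>i. phi0 (i + length X))
      (phibar (length X) (length Z) (psum (length X) phi0 (\<lambda>i. phi0 (i + (length X + length Y)))))) phi0"
    using valid_tau_triple[OF X _ injm_phi0, of "Y @ Z"] Y Z
    by (intro canon_cong[OF ob(1,3), symmetric]) (simp_all add: psum_shift_phibar_psum)
  also have "\<dots> = cmp SC (sigma_tens C (idn SC Y) (sigma_tau C X Z)) (sigma_tens C (sigma_tau C X Y) (idn SC Z))"
    using cmp_canon[OF ob T1(2) T2(2)] T1(1) T2(1) by simp
  finally show ?thesis .
qed

theorem is_permutative_sigma_cat: "is_permutative SC (@) (sigma_tens C) [] (sigma_tau C)"
  unfolding is_permutative_def
  by (intro conjI ballI impI;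
      (rule is_cat_sigma_cat sigma_tens_in_hom sigma_tens_idn sigma_tens_cmp sigma_tens_unit
        sigma_tens_assoc sigma_tau_in_hom sigma_tau_natural sigma_tau_involutive sigma_tau_hexagon
        sigma_tau_Nil)?;
      simp add: ob_sigma_cat_iff)

lemma tens_reps_nonempty: "a \<in> ar SC \<Longrightarrow> b \<in> ar SC \<Longrightarrow> tens_reps a b \<noteq> {}"
  unfolding ar_sigma_cat_iff using tens_reps_arr_nonempty by blast

lemma tens_of_eq_sigma_tens:
  assumes "a \<in> ar SC" "b \<in> ar SC" "p \<in> tens_reps a b"
  shows "tens_of C a b p = sigma_tens C a b"
proof -
  obtain Xs Ys t Xs' Ys' s where "a = arr Xs Ys t" "set Xs \<subseteq> ob C" "set Ys \<subseteq> ob C" "valid C Xs Ys t"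
    and "b = arr Xs' Ys' s" "set Xs' \<subseteq> ob C" "set Ys' \<subseteq> ob C" "valid C Xs' Ys' s"
    using assms(1,2) unfolding ar_sigma_cat_iff by blast
  then show ?thesis
    using sigma_tens_arr_eq_tens_of assms(3) by simp
qed

lemma tau_of_eq_sigma_tau:
  "set Xs \<subseteq> ob C \<Longrightarrow> set Ys \<subseteq> ob C \<Longrightarrow> injm (length Xs + length Ys) \<phi> \<Longrightarrow>
    tau_of C Xs Ys \<phi> = sigma_tau C Xs Ys"
  unfolding sigma_tau_def using tau_of_well_defined injm_phi0 by blast

lemma sigma_fun_id: "a \<in> ar SC \<Longrightarrow> sigma_fun C id id a = a"
proof (elim ar_sigma_cat_cases)
  fix Xs Ys \<psi> f \<phi> assume a: "a = arr Xs Ys (\<psi>, f, \<phi>)" "set Xs \<subseteq> ob C" "set Ys \<subseteq> ob C"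
    "valid C Xs Ys (\<psi>, f, \<phi>)"
  then have "rep a \<in> cls C Xs Ys (\<psi>, f, \<phi>)"
    using rep_arr by blast
  then show "sigma_fun C id id a = a"
    using cls_eq_if_mem[OF a(2-4)] a(1) by (cases "rep a") (simp add: sigma_fun_def arr_def)
qed

end

section \<open>\<open>\<Sigma>\<close> on morphisms\<close>

locale parsummable_morphism = C: parsummable C + D: parsummable D
  for C :: "('o,'m,'z) psc_scheme" and D :: "('p,'n,'y) psc_scheme" +
  fixes Fo :: "'o \<Rightarrow> 'p" and Fm :: "'m \<Rightarrow> 'n"
  assumes psmor: "is_psmor C D Fo Fm"
begin

lemma is_functor_F: "is_functor C D Fo Fm"
  using psmor by (simp add: is_psmor_def)

lemma F_ob: "X \<in> ob C \<Longrightarrow> Fo X \<in> ob D"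
  using is_functor_F unfolding is_functor_def by blast

lemma F_hom: "f \<in> hom C X Y \<Longrightarrow> Fm f \<in> hom D (Fo X) (Fo Y)"
  using is_functor_F unfolding is_functor_def hom_def by blast

lemma F_idn: "X \<in> ob C \<Longrightarrow> Fm (idn C X) = idn D (Fo X)"
  using is_functor_F unfolding is_functor_def by blast

lemma F_cmp: "f \<in> ar C \<Longrightarrow> g \<in> ar C \<Longrightarrow> dm C g = cd C f \<Longrightarrow> Fm (cmp C g f) = cmp D (Fm g) (Fm f)"
  using is_functor_F unfolding is_functor_def by blast

lemma F_act: "inj u \<Longrightarrow> X \<in> ob C \<Longrightarrow> Fo (act C u X) = act D u (Fo X)"
  using psmor unfolding is_psmor_def injs_def by blast

lemma F_trn: "inj u \<Longrightarrow> inj v \<Longrightarrow> X \<in> ob C \<Longrightarrow> Fm (trn C v u X) = trn D v u (Fo X)"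
  using psmor unfolding is_psmor_def injs_def by blast

lemma F_zer: "Fo (zer C) = zer D"
  using psmor by (simp add: is_psmor_def)

lemma F_pls: "X \<in> ob C \<Longrightarrow> Y \<in> ob C \<Longrightarrow> dsj C X Y \<Longrightarrow> Fo (pls C X Y) = pls D (Fo X) (Fo Y)"
  using psmor unfolding is_psmor_def by blast

lemma F_plsm: "f \<in> hom C X Y \<Longrightarrow> g \<in> hom C X' Y' \<Longrightarrow> dsj C X X' \<Longrightarrow> dsj C Y Y' \<Longrightarrow>
    Fm (plsm C f g) = plsm D (Fm f) (Fm g)"
  using psmor unfolding is_psmor_def hom_def dsjm_def by blast

lemma map_F_ob: "set Xs \<subseteq> ob C \<Longrightarrow> set (map Fo Xs) \<subseteq> ob D"
  using F_ob by auto

lemma F_push: "set Xs \<subseteq> ob C \<Longrightarrow> injm (length Xs) \<phi> \<Longrightarrow> Fo (push C \<phi> Xs) = push D \<phi> (map Fo Xs)"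
proof (induction Xs arbitrary: \<phi>)
  case Nil
  then show ?case by (simp add: push_Nil F_zer)
next
  case (Cons X Xs)
  note inj = injm_Suc[of "length Xs" \<phi>]
  have "act C (\<phi> 0) X \<in> ob C" "push C (\<lambda>i. \<phi> (Suc i)) Xs \<in> ob C"
    using C.act_in_ob C.push_in_ob inj Cons.prems by auto
  then show ?case
    using Cons inj C.dsj_act_push by (simp add: push_Cons F_pls F_act)
qed

lemma F_pushm:
  "set Xs \<subseteq> ob C \<Longrightarrow> injm (length Xs) \<phi> \<Longrightarrow> injm (length Xs) \<phi>' \<Longrightarrow>
    Fm (pushm C \<phi>' \<phi> Xs) = pushm D \<phi>' \<phi> (map Fo Xs)"
proof (induction Xs arbitrary: \<phi> \<phi>')
  case Nil
  then show ?case by (simp add: pushm_Nil F_zer F_idn C.zer_in_ob)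
next
  case (Cons X Xs)
  note inj = injm_Suc[of "length Xs" \<phi>] injm_Suc[of "length Xs" \<phi>']
  have "trn C (\<phi>' 0) (\<phi> 0) X \<in> hom C (act C (\<phi> 0) X) (act C (\<phi>' 0) X)"
    using C.trn_in_hom inj Cons.prems by auto
  moreover have "pushm C (\<lambda>i. \<phi>' (Suc i)) (\<lambda>i. \<phi> (Suc i)) Xs \<in>
      hom C (push C (\<lambda>i. \<phi> (Suc i)) Xs) (push C (\<lambda>i. \<phi>' (Suc i)) Xs)"
    using C.pushm_in_hom inj Cons.prems by auto
  ultimately show ?case
    using Cons inj C.dsj_act_push by (simp add: pushm_Cons F_plsm F_trn)
qed

definition map_triple :: "'m triple \<Rightarrow> 'n triple" where
  "map_triple t = (case t of (\<psi>, f, \<phi>) \<Rightarrow> (\<psi>, Fm f, \<phi>))"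

lemma valid_map_triple:
  "set Xs \<subseteq> ob C \<Longrightarrow> set Ys \<subseteq> ob C \<Longrightarrow> valid C Xs Ys t \<Longrightarrow> valid D (map Fo Xs) (map Fo Ys) (map_triple t)"
  by (cases t) (auto simp: C.valid_iff D.valid_iff map_triple_def F_push[symmetric] F_hom)

lemma srel_map_triple:
  assumes ob: "set Xs \<subseteq> ob C" "set Ys \<subseteq> ob C"
    and v: "valid C Xs Ys (\<psi>, f, \<phi>)" "valid C Xs Ys (\<psi>', f', \<phi>')"
    and r: "srel C Xs Ys (\<psi>, f, \<phi>) (\<psi>', f', \<phi>')"
  shows "srel D (map Fo Xs) (map Fo Ys) (map_triple (\<psi>, f, \<phi>)) (map_triple (\<psi>', f', \<phi>'))"
proof -
  have "injm (length Xs) \<phi>" "injm (length Ys) \<psi>" "f \<in> ar C" "dm C f = push C \<phi> Xs" "cd C f = push C \<psi> Ys"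
    "injm (length Xs) \<phi>'" "injm (length Ys) \<psi>'"
    using v by (auto simp: C.valid_iff hom_def)
  then have "Fm (cmp C (pushm C \<psi>' \<psi> Ys) (cmp C f (pushm C \<phi> \<phi>' Xs))) =
      cmp D (pushm D \<psi>' \<psi> (map Fo Ys)) (cmp D (Fm f) (pushm D \<phi> \<phi>' (map Fo Xs)))"
    using ob by (simp add: F_cmp C.arrow_simps F_pushm)
  then show ?thesis
    using r by (simp add: C.srel_iff D.srel_iff map_triple_def)
qed

lemma sigma_fun_arr:
  assumes ob: "set Xs \<subseteq> ob C" "set Ys \<subseteq> ob C" and v: "valid C Xs Ys t"
  shows "sigma_fun D Fo Fm (C.arr Xs Ys t) = D.arr (map Fo Xs) (map Fo Ys) (map_triple t)"
proof -
  have r: "valid C Xs Ys (rep (C.arr Xs Ys t))" "srel C Xs Ys t (rep (C.arr Xs Ys t))"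
    using C.rep_arr[OF ob v] by (simp_all add: C.mem_cls_iff)
  have "sigma_fun D Fo Fm (C.arr Xs Ys t) = D.arr (map Fo Xs) (map Fo Ys) (map_triple (rep (C.arr Xs Ys t)))"
    by (cases "rep (C.arr Xs Ys t)") (simp add: sigma_fun_def D.arr_def map_triple_def C.arr_parts)
  also have "\<dots> = D.arr (map Fo Xs) (map Fo Ys) (map_triple t)"
    using D.arr_eqI[OF map_F_ob[OF ob(1)] map_F_ob[OF ob(2)] valid_map_triple[OF ob r(1)] valid_map_triple[OF ob v]]
      D.srel_sym[OF map_F_ob[OF ob(1)] map_F_ob[OF ob(2)] valid_map_triple[OF ob v] valid_map_triple[OF ob r(1)]]
      srel_map_triple[OF ob] v r
    by (metis prod_cases3)
  finally show ?thesis .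
qed

lemma cls_map_triple_eq_sigma_fun:
  assumes "a \<in> ar C.SC" "t \<in> snd (snd a)"
  shows "case t of (\<psi>, f, \<phi>) \<Rightarrow>
    cls D (map Fo (fst a)) (map Fo (fst (snd a))) (\<psi>, Fm f, \<phi>) = snd (snd (sigma_fun D Fo Fm a))"
proof -
  obtain Xs Ys t\<^sub>0 where a: "a = C.arr Xs Ys t\<^sub>0" "set Xs \<subseteq> ob C" "set Ys \<subseteq> ob C" "valid C Xs Ys t\<^sub>0"
    using assms(1) unfolding C.ar_sigma_cat_iff by blast
  have t: "t \<in> cls C Xs Ys t\<^sub>0"
    using assms(2) a(1) by (simp add: C.arr_parts)
  then have "a = C.arr Xs Ys t" "valid C Xs Ys t"
    using C.cls_eq_if_mem[OF a(2-4)] a(1) by (simp_all add: C.arr_def C.mem_cls_iff)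
  then show ?thesis
    using sigma_fun_arr[OF a(2,3)] by (cases t) (simp add: D.arr_parts C.arr_parts map_triple_def)
qed

lemma map_triple_comp_triple:
  assumes ob: "set Ys \<subseteq> ob C"
    and v: "valid C Xs Ys (\<psi>, f, \<phi>)" "valid C Ys Zs (\<rho>, g, \<theta>)"
  shows "map_triple (C.comp_triple Ys (\<rho>, g, \<theta>) (\<psi>, f, \<phi>)) =
    D.comp_triple (map Fo Ys) (map_triple (\<rho>, g, \<theta>)) (map_triple (\<psi>, f, \<phi>))"
proof -
  have "injm (length Ys) \<psi>" "f \<in> ar C" "cd C f = push C \<psi> Ys"
    "injm (length Ys) \<theta>" "g \<in> ar C" "dm C g = push C \<theta> Ys"
    using v by (auto simp: C.valid_iff hom_def)
  then show ?thesis
    using ob by (simp add: C.comp_triple_def D.comp_triple_def map_triple_def F_cmp C.arrow_simps F_pushm)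
qed

lemma is_functor_sigma_fun: "is_functor C.SC D.SC (map Fo) (sigma_fun D Fo Fm)"
  unfolding is_functor_def
proof (intro conjI ballI impI)
  fix Xs assume "Xs \<in> ob C.SC"
  then show "map Fo Xs \<in> ob D.SC"
    using map_F_ob by (simp add: C.ob_sigma_cat_iff D.ob_sigma_cat_iff)
next
  fix a assume "a \<in> ar C.SC"
  then show "sigma_fun D Fo Fm a \<in> hom D.SC (map Fo (dm C.SC a)) (map Fo (cd C.SC a))"
    by (auto simp: C.ar_sigma_cat_iff sigma_fun_arr C.dm_arr C.cd_arr
        intro!: D.arr_in_hom map_F_ob valid_map_triple)
next
  fix Xs assume "Xs \<in> ob C.SC"
  then have ob: "set Xs \<subseteq> ob C"
    by (simp add: C.ob_sigma_cat_iff)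
  then show "sigma_fun D Fo Fm (idn C.SC Xs) = idn D.SC (map Fo Xs)"
    using sigma_fun_arr[OF ob ob] injm_phi0
    by (simp add: C.sigma_cat_simps D.sigma_cat_simps C.valid_iff C.idn_in_hom C.push_in_ob
        map_triple_def F_idn F_push)
next
  fix a b assume "a \<in> ar C.SC" "b \<in> ar C.SC" "dm C.SC b = cd C.SC a"
  then obtain Xs Ys Zs \<psi> f \<phi> \<rho> g \<theta> where ab: "a = C.arr Xs Ys (\<psi>, f, \<phi>)" "b = C.arr Ys Zs (\<rho>, g, \<theta>)"
    and ob: "set Xs \<subseteq> ob C" "set Ys \<subseteq> ob C" "set Zs \<subseteq> ob C"
    and v: "valid C Xs Ys (\<psi>, f, \<phi>)" "valid C Ys Zs (\<rho>, g, \<theta>)"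
    by (elim C.ar_sigma_cat_cases) (auto simp: C.dm_arr C.cd_arr)
  show "sigma_fun D Fo Fm (cmp C.SC b a) = cmp D.SC (sigma_fun D Fo Fm b) (sigma_fun D Fo Fm a)"
    using D.cmp_arr[OF map_F_ob[OF ob(1)] map_F_ob[OF ob(2)] map_F_ob[OF ob(3)]
        valid_map_triple[OF ob(1,2) v(1)] valid_map_triple[OF ob(2,3) v(2)]]
      C.cmp_arr[OF ob v] sigma_fun_arr C.valid_comp_triple[OF ob v] map_triple_comp_triple[OF ob(2) v] ab ob v
    by simp
qed

lemma sigma_fun_tens:
  assumes "a \<in> ar C.SC" "b \<in> ar C.SC"
  shows "sigma_fun D Fo Fm (sigma_tens C a b) = sigma_tens D (sigma_fun D Fo Fm a) (sigma_fun D Fo Fm b)"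
proof -
  obtain Xs Ys f where a: "a = C.arr Xs Ys (stripe 0, f, stripe 0)" "set Xs \<subseteq> ob C" "set Ys \<subseteq> ob C"
    "valid C Xs Ys (stripe 0, f, stripe 0)"
    using C.ar_sigma_cat_obtain[OF assms(1) injm_stripe injm_stripe] .
  obtain Xs' Ys' g where b: "b = C.arr Xs' Ys' (stripe 1, g, stripe 1)" "set Xs' \<subseteq> ob C" "set Ys' \<subseteq> ob C"
    "valid C Xs' Ys' (stripe 1, g, stripe 1)"
    using C.ar_sigma_cat_obtain[OF assms(2) injm_stripe injm_stripe] .
  have hom: "f \<in> hom C (push C (stripe 0) Xs) (push C (stripe 0) Ys)"
    "g \<in> hom C (push C (stripe 1) Xs') (push C (stripe 1) Ys')"
    using a(4) b(4) by (simp_all add: C.valid_iff)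
  have "Fm (plsm C f g) = plsm D (Fm f) (Fm g)"
    by (rule F_plsm[OF hom C.push_dsj C.push_dsj]) (use a b injm_stripe stripe_disjoint in auto)
  moreover note C.sigma_tens_stripes[OF a(2,3) b(2,3) a(4) b(4)]
    and D.sigma_tens_stripes[OF map_F_ob[OF a(2)] map_F_ob[OF a(3)] map_F_ob[OF b(2)] map_F_ob[OF b(3)]
      valid_map_triple[OF a(2-4), unfolded map_triple_def, simplified]
      valid_map_triple[OF b(2-4), unfolded map_triple_def, simplified]]
  ultimately show ?thesis
    using a b by (simp add: sigma_fun_arr map_triple_def)
qed

lemma sigma_fun_tau:
  assumes "set Xs \<subseteq> ob C" "set Ys \<subseteq> ob C"
  shows "sigma_fun D Fo Fm (sigma_tau C Xs Ys) = sigma_tau D (map Fo Xs) (map Fo Ys)"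
  using sigma_fun_arr[of "Xs @ Ys" "Ys @ Xs"] C.valid_tau_triple[OF assms injm_phi0] assms injm_phi0
  by (simp add: sigma_tau_def tau_of_def C.arr_def[symmetric] D.arr_def[symmetric] map_triple_def
      F_idn C.push_in_ob F_push)

theorem is_strict_sym_monoidal_sigma_fun:
  "is_strict_sym_monoidal C.SC (@) (sigma_tens C) [] (sigma_tau C) D.SC (@) (sigma_tens D) [] (sigma_tau D)
    (map Fo) (sigma_fun D Fo Fm)"
  unfolding is_strict_sym_monoidal_def
  using is_functor_sigma_fun sigma_fun_tens sigma_fun_tau by (simp add: C.ob_sigma_cat_iff)

end

lemma parsummable_morphismI:
  "is_parsum C \<Longrightarrow> is_parsum D \<Longrightarrow> is_psmor C D Fo Fm \<Longrightarrow> parsummable_morphism C D Fo Fm"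
  by (intro parsummable_morphism.intro parsummable.intro parsummable_morphism_axioms.intro)

lemma sigma_fun_comp:
  assumes "parsummable_morphism C D Fo Fm" "parsummable_morphism D E Go Gm" "a \<in> ar (sigma_cat C)"
  shows "sigma_fun E (Go \<circ> Fo) (Gm \<circ> Fm) a = sigma_fun E Go Gm (sigma_fun D Fo Fm a)"
proof -
  interpret F: parsummable_morphism C D Fo Fm by (rule assms(1))
  interpret G: parsummable_morphism D E Go Gm by (rule assms(2))
  obtain Xs Ys t where a: "a = F.C.arr Xs Ys t" "set Xs \<subseteq> ob C" "set Ys \<subseteq> ob C" "valid C Xs Ys t"
    using assms(3) unfolding F.C.ar_sigma_cat_iff by blast
  obtain \<psi> f \<phi> where r: "rep a = (\<psi>, f, \<phi>)"
    by (cases "rep a")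
  have "valid C Xs Ys (\<psi>, f, \<phi>)"
    using F.C.rep_arr[OF a(2-4)] a(1) r by (simp add: F.C.mem_cls_iff)
  then have "valid D (map Fo Xs) (map Fo Ys) (\<psi>, Fm f, \<phi>)"
    using F.valid_map_triple[OF a(2,3), of "(\<psi>, f, \<phi>)"] by (simp add: F.map_triple_def)
  moreover have "sigma_fun D Fo Fm a = F.D.arr (map Fo Xs) (map Fo Ys) (\<psi>, Fm f, \<phi>)"
    and "sigma_fun E (Go \<circ> Fo) (Gm \<circ> Fm) a = G.D.arr (map Go (map Fo Xs)) (map Go (map Fo Ys)) (\<psi>, Gm (Fm f), \<phi>)"
    using a(1) r by (simp_all add: sigma_fun_def F.C.arr_parts F.D.arr_def G.D.arr_def)
  ultimately show ?thesis
    using G.sigma_fun_arr[OF F.map_F_ob[OF a(2)] F.map_F_ob[OF a(3)]] by (simp add: G.map_triple_def)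
qed

theorem proposition2p7:
  fixes C :: "('o,'m) psc" and D :: "('p,'n) psc" and E :: "('q,'l) psc"
    and Fo :: "'o \<Rightarrow> 'p" and Fm :: "'m \<Rightarrow> 'n"
    and Go :: "'p \<Rightarrow> 'q" and Gm :: "'n \<Rightarrow> 'l"
  shows
   \<comment> \<open>(1) tensor and symmetry are well-defined and make Sigma(C) permutative with unit []\<close>
   "(is_parsum C \<longrightarrow>
      (\<forall>a\<in>ar (sigma_cat C). \<forall>b\<in>ar (sigma_cat C).
         tens_reps a b \<noteq> {} \<and> (\<forall>p\<in>tens_reps a b. tens_of C a b p = sigma_tens C a b)) \<and>
      (\<forall>Xs\<in>lists (ob C). \<forall>Ys\<in>lists (ob C). \<forall>\<phi>. injm (length Xs + length Ys) \<phi> \<longrightarrow>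
         tau_of C Xs Ys \<phi> = sigma_tau C Xs Ys) \<and>
      is_permutative (sigma_cat C) (@) (sigma_tens C) [] (sigma_tau C))
    \<and>
    \<comment> \<open>(2) Sigma(F) is well-defined and strict symmetric monoidal\<close>
    (is_parsum C \<and> is_parsum D \<and> is_psmor C D Fo Fm \<longrightarrow>
      (\<forall>a\<in>ar (sigma_cat C). \<forall>t\<in>snd (snd a). case t of (\<psi>, f, \<phi>) \<Rightarrow>
         cls D (map Fo (fst a)) (map Fo (fst (snd a))) (\<psi>, Fm f, \<phi>) = snd (snd (sigma_fun D Fo Fm a))) \<and>
      is_strict_sym_monoidal
        (sigma_cat C) (@) (sigma_tens C) [] (sigma_tau C)
        (sigma_cat D) (@) (sigma_tens D) [] (sigma_tau D)
        (map Fo) (sigma_fun D Fo Fm))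
    \<and>
    \<comment> \<open>(3) functoriality of Sigma : ParSumCat \<rightarrow> PermCat\<close>
    (is_parsum C \<longrightarrow>
      (\<forall>Xs\<in>ob (sigma_cat C). map id Xs = Xs) \<and>
      (\<forall>a\<in>ar (sigma_cat C). sigma_fun C id id a = a))
    \<and>
    (is_parsum C \<and> is_parsum D \<and> is_parsum E \<and> is_psmor C D Fo Fm \<and> is_psmor D E Go Gm \<longrightarrow>
      (\<forall>Xs\<in>ob (sigma_cat C). map (Go \<circ> Fo) Xs = map Go (map Fo Xs)) \<and>
      (\<forall>a\<in>ar (sigma_cat C).
         sigma_fun E (Go \<circ> Fo) (Gm \<circ> Fm) a = sigma_fun E Go Gm (sigma_fun D Fo Fm a)))"
  by (intro conjI impI ballI allI; (elim conjE)?)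
    (simp_all add: lists_eq_set parsummable.tens_reps_nonempty[OF parsummable.intro]
      parsummable.tens_of_eq_sigma_tens[OF parsummable.intro] parsummable.tau_of_eq_sigma_tau[OF parsummable.intro]
      parsummable.is_permutative_sigma_cat[OF parsummable.intro] parsummable.sigma_fun_id[OF parsummable.intro]
      parsummable_morphism.cls_map_triple_eq_sigma_fun[OF parsummable_morphismI]
      parsummable_morphism.is_strict_sym_monoidal_sigma_fun[OF parsummable_morphismI]
      sigma_fun_comp[OF parsummable_morphismI parsummable_morphismI])

end
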